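(* Let $H>0$, $g>0$, and let $\bar\rho$ be a smooth function on $[-H,0]$ for which there exist constants $c^*,c_*>0$ with $c_*\le \bar\rho\le c^*$ and $-\bar\rho'\ge c_*$ on $[-H,0]$. Let $N^2:=-g\bar\rho'/\bar\rho$, and let $(c_n,f_n)_{n\ge1}$ be the eigen-elements of the Sturm–Liouville problem described in the context. Define the operator $M$ on $\ell^2(\mathbb N^* )$ by $(Mu)_n=\sum_{m\ge1}M_{n,m}u_m$ with $$M_{n,m}:=c_nc_m\int_{-H}^0 f_n(r)f_m(r)\bar\rho(r)\,dr .$$ Then there exists $C>0$ such that: (i) $M$ is a bounded linear operator on $\ell^2(\mathbb N^* )$ and $|Mu|_{\ell^2}\le C\,|(c_nu_n)_n|_{\ell^2}$ for all $u\in\ell^2(\mathbb N^* )$; (ii) $M$ is symmetric: $\langle Mu,v\rangle=\langle u,Mv\rangle$ for all $u,v\in\ell^2(\mathbb N^* )$; (iii) $\langle Mu,u\rangle\ge \frac1C |(c_nu_n)_n|_{\ell^2}^2$ for all $u\in\ell^2(\mathbb N^* )$; (iv) consequently $M$ has a unique positive square root $M^{1/2}$ (i.e. $(M^{1/2})^2=M$), and it satisfies $\frac1C|(c_nu_n)_n|_{\ell^2}\le |M^{1/2}u|_{\ell^2}\le C|(c_nu_n)_n|_{\ell^2}$ for all $u\in\ell^2(\mathbb N^* )$; (v) if $N^2$ is constant (independent of $r$), then $M$ is diagonal with $M_{n,n}=c_n^2/N^2$ and $M_{n,m}=0$ for $n\ne m$.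
   Context: $\ell^2(\mathbb N^* )$ is the space of real square-summable sequences indexed by positive integers, with scalar product $\langle u,v\rangle=\sum_n u_nv_n$. For $n\ge1$, $c_n>0$ and $f_n$ are defined by the Sturm–Liouville eigenvalue problem $(\bar\rho f_n')'=-\bar\rho N^2\frac{1}{c_n^2}f_n$ on $(-H,0)$ with $f_n(-H)=f_n(0)=0$, where $(c_n)_{n\ge1}$ is ordered decreasingly and the family $(f_n)_{n\ge1}$ is normalized to be an orthonormal basis of the weighted space $L^2_{\bar\rho N^2}([-H,0])$ (scalar product $\int_{-H}^0 fg\,\bar\rho N^2$). *)

theory Defs
  imports "HOL-Analysis.Analysis"
begin

definition smooth_on :: "real set \<Rightarrow> (real \<Rightarrow> real) \<Rightarrow> bool" where
  "smooth_on S f \<longleftrightarrow> (\<exists>U. open U \<and> S \<subseteq> U \<and>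
      (\<forall>k. \<forall>x\<in>U. ((deriv ^^ k) f) differentiable (at x)))"

definition Nsq :: "real \<Rightarrow> (real \<Rightarrow> real) \<Rightarrow> real \<Rightarrow> real" where
  "Nsq g rho r = - g * deriv rho r / rho r"

definition SL_eigen :: "real \<Rightarrow> (real \<Rightarrow> real) \<Rightarrow> (real \<Rightarrow> real) \<Rightarrow> real \<Rightarrow> (real \<Rightarrow> real) \<Rightarrow> bool" where
  "SL_eigen H rho N2 c f \<longleftrightarrow> c > 0 \<and> continuous_on {-H..0} f \<and> f (-H) = 0 \<and> f 0 = 0 \<and>
     (\<forall>r\<in>{-H<..<0}. f differentiable (at r)) \<and>
     (\<forall>r\<in>{-H<..<0}. ((\<lambda>s. rho s * deriv f s) has_real_derivative
                         (- rho r * N2 r * (1 / c\<^sup>2) * f r)) (at r))"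

definition ONB_weighted :: "real \<Rightarrow> (real \<Rightarrow> real) \<Rightarrow> (nat \<Rightarrow> real \<Rightarrow> real) \<Rightarrow> bool" where
  "ONB_weighted H w f \<longleftrightarrow>
     (\<forall>n\<ge>1. \<forall>m\<ge>1. (LINT r:{-H..0}|lborel. f n r * f m r * w r) = (if n = m then 1 else 0)) \<and>
     (\<forall>h. h \<in> borel_measurable lborel \<longrightarrow>
          set_integrable lborel {-H..0} (\<lambda>r. (h r)\<^sup>2 * w r) \<longrightarrow>
          (\<forall>n\<ge>1. (LINT r:{-H..0}|lborel. h r * f n r * w r) = 0) \<longrightarrow>
          (AE r in lborel. r \<in> {-H..0} \<longrightarrow> h r = 0))"

text \<open>l^2(N^*): real sequences indexed by positive integers, represented as
  functions nat => real vanishing at index 0.\<close>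
definition l2 :: "(nat \<Rightarrow> real) set" where
  "l2 = {u. u 0 = 0 \<and> (\<lambda>n. (u n)\<^sup>2) summable_on {1..}}"

definition l2inner :: "(nat \<Rightarrow> real) \<Rightarrow> (nat \<Rightarrow> real) \<Rightarrow> real" where
  "l2inner u v = (\<Sum>\<^sub>\<infinity>n\<in>{1..}. u n * v n)"

definition l2norm :: "(nat \<Rightarrow> real) \<Rightarrow> real" where
  "l2norm u = sqrt (\<Sum>\<^sub>\<infinity>n\<in>{1..}. (u n)\<^sup>2)"

definition bounded_linear_l2 :: "((nat \<Rightarrow> real) \<Rightarrow> (nat \<Rightarrow> real)) \<Rightarrow> bool" where
  "bounded_linear_l2 T \<longleftrightarrow> (\<forall>u\<in>l2. T u \<in> l2) \<and>
     (\<forall>u\<in>l2. \<forall>v\<in>l2. \<forall>a b. T (\<lambda>n. a * u n + b * v n) = (\<lambda>n. a * T u n + b * T v n)) \<and>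
     (\<exists>B. \<forall>u\<in>l2. l2norm (T u) \<le> B * l2norm u)"

definition positive_l2 :: "((nat \<Rightarrow> real) \<Rightarrow> (nat \<Rightarrow> real)) \<Rightarrow> bool" where
  "positive_l2 T \<longleftrightarrow> bounded_linear_l2 T \<and>
     (\<forall>u\<in>l2. \<forall>v\<in>l2. l2inner (T u) v = l2inner u (T v)) \<and>
     (\<forall>u\<in>l2. l2inner (T u) u \<ge> 0)"

definition Mmat :: "real \<Rightarrow> (real \<Rightarrow> real) \<Rightarrow> (nat \<Rightarrow> real) \<Rightarrow> (nat \<Rightarrow> real \<Rightarrow> real) \<Rightarrow> nat \<Rightarrow> nat \<Rightarrow> real" where
  "Mmat H rho c f n m = c n * c m * (LINT r:{-H..0}|lborel. f n r * f m r * rho r)"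

definition Mop :: "(nat \<Rightarrow> nat \<Rightarrow> real) \<Rightarrow> (nat \<Rightarrow> real) \<Rightarrow> (nat \<Rightarrow> real)" where
  "Mop A u = (\<lambda>n. if n = 0 then 0 else (\<Sum>\<^sub>\<infinity>m\<in>{1..}. A n m * u m))"

end

theory Submission
  imports Defs
begin

text \<open>Write \<open>M = D A D\<close> with \<open>D = diag (c\<^sub>n)\<close> and \<open>A\<^sub>n\<^sub>m = \<integral> f\<^sub>n f\<^sub>m \<rho>\<close>: \<open>A\<close> is the matrix of
  multiplication by \<open>\<rho> / (\<rho> N\<^sup>2) = 1 / N\<^sup>2\<close> in the orthonormal family \<open>(f\<^sub>n)\<close> of
  \<open>L\<^sup>2(\<rho> N\<^sup>2)\<close>. The hypotheses on \<open>\<rho>\<close> bound \<open>N\<^sup>2\<close> above and below, so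
  \<open>q\<^sub>0 \<le> 1 / N\<^sup>2 \<le> q\<^sub>1\<close>. By Bessel's inequality \<open>A\<close> is bounded by \<open>q\<^sub>1\<close>, and its quadratic form,
  computed on finite sections and extended by continuity, lies between \<open>q\<^sub>0 |v|\<^sup>2\<close> and
  \<open>q\<^sub>1 |v|\<^sup>2\<close>. Hence \<open>\<langle>M u, u\<rangle> = \<langle>A D u, D u\<rangle>\<close> is
  comparable to \<open>|D u|\<^sup>2\<close>, which gives (i)--(iii). The positive square root of \<open>M\<close> comes from
  the binomial series of \<open>\<surd>(1 - x)\<close> applied to \<open>1 - M / l\<close> for \<open>l > \<parallel>M\<parallel>\<close>, and
  \<open>|M\<^sup>1\<^sup>/\<^sup>2 u|\<^sup>2 = \<langle>M u, u\<rangle>\<close> gives (iv). If \<open>N\<^sup>2 \<equiv> K\<close>, orthonormality gives \<open>A = I / K\<close>, which is (v).\<close>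

section \<open>Square roots of positive operators\<close>

text \<open>Taylor coefficients at \<open>0\<close> of \<open>\<surd>(1 - x)\<close> and of \<open>1 / \<surd>(1 - x)\<close>.\<close>

definition sqrt_coeff :: "nat \<Rightarrow> real" where
  "sqrt_coeff k = (-1) ^ k * ((1/2) gchoose k)"

definition rsqrt_coeff :: "nat \<Rightarrow> real" where
  "rsqrt_coeff k = (-1) ^ k * ((-1/2) gchoose k)"

lemma rsqrt_coeff_nonneg: "rsqrt_coeff k \<ge> 0"
proof -
  have "rsqrt_coeff k = ((1/2 + of_nat k - 1) gchoose k)"
    by (simp add: rsqrt_coeff_def gbinomial_minus[of "1/2::real"])
  also have "\<dots> = (\<Prod>i = 0..<k. ((1/2 + of_nat k - 1) - of_nat i) / of_nat (k - i))"
    by (rule gbinomial_altdef_of_nat)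
  also have "\<dots> \<ge> 0"
    by (intro prod_nonneg) (auto simp: of_nat_diff)
  finally show ?thesis .
qed

lemma sum_sqrt_coeff: "(\<Sum>k\<le>n. sqrt_coeff k) = rsqrt_coeff n"
  using gbinomial_sum_lower_neg[of "1/2::real" n]
  by (simp add: sqrt_coeff_def rsqrt_coeff_def mult.commute)

lemma sqrt_coeff_0 [simp]: "sqrt_coeff 0 = 1"
  by (simp add: sqrt_coeff_def)

lemma sqrt_coeff_Suc: "sqrt_coeff (Suc k) = - rsqrt_coeff k / (2 * (real k + 1))"
proof -
  have "of_nat (Suc k) * ((1/2::real) gchoose Suc k) = (1/2) * ((1/2 - 1) gchoose k)"
    by (rule gbinomial_absorption)
  then have "((1/2::real) gchoose Suc k) = ((-1/2) gchoose k) / (2 * (real k + 1))"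
    by (simp add: field_simps)
  then show ?thesis
    by (simp add: sqrt_coeff_def rsqrt_coeff_def)
qed

lemma sqrt_coeff_Suc_nonpos: "sqrt_coeff (Suc k) \<le> 0"
  using rsqrt_coeff_nonneg[of k] by (simp add: sqrt_coeff_Suc divide_nonpos_pos)

lemma sum_abs_sqrt_coeff_Suc: "(\<Sum>k<n. \<bar>sqrt_coeff (Suc k)\<bar>) = 1 - rsqrt_coeff n"
proof -
  have "(\<Sum>k<n. \<bar>sqrt_coeff (Suc k)\<bar>) = - (\<Sum>k<n. sqrt_coeff (Suc k))"
    using sqrt_coeff_Suc_nonpos by (simp add: sum_negf[symmetric] abs_of_nonpos)
  also have "(\<Sum>k<n. sqrt_coeff (Suc k)) = (\<Sum>k\<le>n. sqrt_coeff k) - 1"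
    by (simp add: sum.atMost_shift)
  finally show ?thesis
    by (simp add: sum_sqrt_coeff)
qed

lemma summable_abs_sqrt_coeff_Suc: "summable (\<lambda>k. \<bar>sqrt_coeff (Suc k)\<bar>)"
  by (rule summableI_nonneg_bounded[where x=1])
    (auto simp: sum_abs_sqrt_coeff_Suc rsqrt_coeff_nonneg)

lemma suminf_abs_sqrt_coeff_Suc_le: "(\<Sum>k. \<bar>sqrt_coeff (Suc k)\<bar>) \<le> 1"
  by (rule suminf_le_const[OF summable_abs_sqrt_coeff_Suc])
    (simp add: sum_abs_sqrt_coeff_Suc rsqrt_coeff_nonneg)

lemma summable_abs_sqrt_coeff: "summable (\<lambda>k. \<bar>sqrt_coeff k\<bar>)"
  using summable_abs_sqrt_coeff_Suc summable_Suc_iff[of "\<lambda>k. \<bar>sqrt_coeff k\<bar>"] by simp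

text \<open>Vandermonde's identity for \<open>1/2 + 1/2 = 1\<close>.\<close>

lemma sqrt_coeff_Cauchy_square:
  "(\<Sum>i\<le>n. sqrt_coeff i * sqrt_coeff (n - i)) = (if n = 0 then 1 else if n = 1 then -1 else 0)"
proof -
  have "(\<Sum>i\<le>n. sqrt_coeff i * sqrt_coeff (n - i))
      = (\<Sum>i\<le>n. (-1) ^ n * (((1/2::real) gchoose i) * ((1/2) gchoose (n - i))))"
    by (intro sum.cong refl) (auto simp: sqrt_coeff_def power_add[symmetric])
  also have "\<dots> = (-1) ^ n * (\<Sum>i\<le>n. ((1/2::real) gchoose i) * ((1/2) gchoose (n - i)))"
    by (simp add: sum_distrib_left)
  also have "\<dots> = (-1) ^ n * of_nat (1 choose n)"
    using gbinomial_Vandermonde[of "1/2::real" "1/2" n]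
    by (simp add: atMost_atLeast0 binomial_gbinomial)
  finally show ?thesis
    by (cases n) (auto simp: binomial_eq_0)
qed

lemma Cauchy_product_square_minus_triangle_tendsto:
  fixes a :: "nat \<Rightarrow> 'a::real_normed_vector" and b :: "nat \<Rightarrow> 'b::real_normed_vector"
  assumes a: "summable (\<lambda>k. norm (a k))" and b: "summable (\<lambda>k. norm (b k))"
  shows "(\<lambda>n. (\<Sum>(i, j)\<in>{..<n} \<times> {..<n}. norm (a i) * norm (b j))
      - (\<Sum>(i, j)\<in>{(i, j). i + j < n}. norm (a i) * norm (b j))) \<longlonglongrightarrow> 0"
proof -
  have "(\<lambda>k. \<Sum>i\<le>k. norm (a i) * norm (b (k - i))) sums ((\<Sum>k. norm (a k)) * (\<Sum>k. norm (b k)))"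
    using Cauchy_product_sums[of "\<lambda>k. norm (a k)" "\<lambda>k. norm (b k)"] a b by simp
  then have triangle: "(\<lambda>n. \<Sum>(i, j)\<in>{(i, j). i + j < n}. norm (a i) * norm (b j))
      \<longlonglongrightarrow> (\<Sum>k. norm (a k)) * (\<Sum>k. norm (b k))"
    by (simp add: sums_def sum.triangle_reindex)
  have square: "(\<lambda>n. \<Sum>(i, j)\<in>{..<n} \<times> {..<n}. norm (a i) * norm (b j))
      \<longlonglongrightarrow> (\<Sum>k. norm (a k)) * (\<Sum>k. norm (b k))"
    using tendsto_mult[OF summable_LIMSEQ[OF a] summable_LIMSEQ[OF b]]
    by (simp add: sum_product sum.cartesian_product)
  show ?thesis
    using tendsto_diff[OF square triangle] by simp
qed

text \<open>The gap between the square and the triangular partial sums is bounded by the same gap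
  for the norms, which tends to zero by the real Cauchy product theorem.\<close>

lemma bounded_bilinear_Cauchy_product_sums:
  fixes prod :: "'a::banach \<Rightarrow> 'b::banach \<Rightarrow> 'c::real_normed_vector"
  assumes prod: "bounded_bilinear prod"
    and a: "summable (\<lambda>k. norm (a k))" and b: "summable (\<lambda>k. norm (b k))"
  shows "(\<lambda>k. \<Sum>i\<le>k. prod (a i) (b (k - i))) sums prod (\<Sum>k. a k) (\<Sum>k. b k)"
proof -
  interpret bounded_bilinear prod by (rule prod)
  obtain K where K: "\<And>x y. norm (prod x y) \<le> norm x * norm y * K"
    using bounded by blast
  let ?sq = "\<lambda>n::nat. {..<n} \<times> {..<n}" and ?tri = "\<lambda>n::nat. {(i, j). i + j < n}"
  let ?p = "\<lambda>(i, j). prod (a i) (b j)" and ?q = "\<lambda>(i, j). norm (a i) * norm (b j)"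
  have tri_sq: "?tri n \<subseteq> ?sq n" for n
    by auto
  have bound: "norm (sum ?p (?sq n) - sum ?p (?tri n)) \<le> K * (sum ?q (?sq n) - sum ?q (?tri n))" for n
  proof -
    have "norm (sum ?p (?sq n) - sum ?p (?tri n)) = norm (sum ?p (?sq n - ?tri n))"
      by (simp add: sum_diff tri_sq)
    also have "\<dots> \<le> (\<Sum>x\<in>?sq n - ?tri n. K * ?q x)"
      by (intro sum_norm_le) (auto simp: mult.commute[of K] K)
    also have "\<dots> = K * (sum ?q (?sq n) - sum ?q (?tri n))"
      by (simp add: sum_distrib_left[symmetric] sum_diff tri_sq)
    finally show ?thesis .
  qed
  have "(\<lambda>n. K * (sum ?q (?sq n) - sum ?q (?tri n))) \<longlonglongrightarrow> 0"
    by (rule tendsto_mult_right_zero[OF Cauchy_product_square_minus_triangle_tendsto[OF a b]])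
  then have gap: "(\<lambda>n. sum ?p (?sq n) - sum ?p (?tri n)) \<longlonglongrightarrow> 0"
    by (rule Lim_null_comparison[OF always_eventually, rotated]) (use bound in blast)
  have "prod (\<Sum>i<n. a i) (\<Sum>j<n. b j) = sum ?p (?sq n)" for n
    by (subst sum_left) (simp add: sum_right sum.cartesian_product)
  then have "(\<lambda>n. sum ?p (?sq n)) \<longlonglongrightarrow> prod (\<Sum>k. a k) (\<Sum>k. b k)"
    using tendsto[OF summable_LIMSEQ summable_LIMSEQ, OF summable_norm_cancel[OF a] summable_norm_cancel[OF b]]
    by simp
  from Lim_transform2[OF this gap] show ?thesis
    by (simp add: sums_def sum.triangle_reindex)
qed

definition selfadjoint :: "('a::real_inner \<Rightarrow>\<^sub>L 'a) \<Rightarrow> bool" where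
  "selfadjoint T \<longleftrightarrow> (\<forall>x y. inner (T x) y = inner x (T y))"

definition positive_op :: "('a::real_inner \<Rightarrow>\<^sub>L 'a) \<Rightarrow> bool" where
  "positive_op T \<longleftrightarrow> selfadjoint T \<and> (\<forall>x. 0 \<le> inner (T x) x)"

text \<open>Expanding \<open>0 \<le> \<langle>T z, z\<rangle>\<close> at \<open>z = \<langle>T y, y\<rangle> x - \<langle>T x, y\<rangle> y\<close>, at
  \<open>z = \<langle>T x, y\<rangle> x - \<langle>T x, x\<rangle> y\<close> and, if both diagonal terms vanish, at \<open>z = x - \<langle>T x, y\<rangle> y\<close>.\<close>

lemma positive_op_Cauchy_Schwarz:
  assumes T: "positive_op T"
  shows "(inner (T x) y)\<^sup>2 \<le> inner (T x) x * inner (T y) y"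
proof -
  define a b c where "a = inner (T x) x" and "b = inner (T x) y" and "c = inner (T y) y"
  have Tyx: "inner (T y) x = b"
    using T by (simp add: positive_op_def selfadjoint_def b_def inner_commute)
  have form: "0 \<le> s\<^sup>2 * a + 2 * s * t * b + t\<^sup>2 * c" for s t
  proof -
    have "0 \<le> inner (T (s *\<^sub>R x + t *\<^sub>R y)) (s *\<^sub>R x + t *\<^sub>R y)"
      using T by (simp add: positive_op_def)
    also have "\<dots> = s\<^sup>2 * a + 2 * s * t * b + t\<^sup>2 * c"
      using Tyx by (simp add: blinfun.bilinear_simps inner_add_left inner_add_right a_def b_def c_def
          power2_eq_square algebra_simps)
    finally show ?thesis .
  qed
  have a: "0 \<le> a" and c: "0 \<le> c"
    using T by (auto simp: positive_op_def a_def c_def)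
  have "b\<^sup>2 \<le> a * c"
  proof (cases "a = 0 \<and> c = 0")
    case True
    then show ?thesis
      using form[of 1 "- b"] by (auto simp: mult_le_0_iff)
  next
    case False
    with a c have "0 < a \<or> 0 < c"
      by auto
    moreover have "0 \<le> c * (a * c - b\<^sup>2)" "0 \<le> a * (a * c - b\<^sup>2)"
      using form[of c "- b"] form[of "- b" a] by (simp_all add: power2_eq_square algebra_simps)
    ultimately show ?thesis
      by (auto simp: zero_le_mult_iff)
  qed
  then show ?thesis
    by (simp add: a_def b_def c_def)
qed

lemma positive_op_zero:
  assumes "positive_op T" and "inner (T x) x = 0"
  shows "T x = 0"
  using positive_op_Cauchy_Schwarz[OF assms(1), of x "T x"] assms(2) by simp

lemma positive_op_norm_le_one:
  assumes R: "positive_op R" and id_minus_R: "positive_op (id_blinfun - R)"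
  shows "norm R \<le> 1"
proof (rule norm_blinfun_bound)
  show "0 \<le> (1::real)"
    by simp
  fix x
  have le: "inner (R y) y \<le> (norm y)\<^sup>2" for y
    using id_minus_R by (simp add: positive_op_def blinfun.bilinear_simps inner_diff_left power2_norm_eq_inner)
  have "(norm (R x))\<^sup>2 * (norm (R x))\<^sup>2 = (inner (R x) (R x))\<^sup>2"
    by (simp add: dot_square_norm power2_eq_square)
  also have "\<dots> \<le> inner (R x) x * inner (R (R x)) (R x)"
    by (rule positive_op_Cauchy_Schwarz[OF R])
  also have "\<dots> \<le> (norm x)\<^sup>2 * (norm (R x))\<^sup>2"
    using R le by (intro mult_mono) (auto simp: positive_op_def)
  finally have ineq: "(norm (R x))\<^sup>2 * (norm (R x))\<^sup>2 \<le> (norm x)\<^sup>2 * (norm (R x))\<^sup>2" .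
  show "norm (R x) \<le> 1 * norm x"
  proof (cases "R x = 0")
    case False
    then have "(norm (R x))\<^sup>2 \<le> (norm x)\<^sup>2"
      using mult_right_le_imp_le[OF ineq] by simp
    then show ?thesis
      by (simp add: power_mono_iff)
  qed simp
qed

lemma blinfun_compose_scaleR_left: "(a *\<^sub>R A) o\<^sub>L B = a *\<^sub>R (A o\<^sub>L B)"
  by (auto intro: blinfun_eqI simp: blinfun.bilinear_simps)

lemma blinfun_compose_scaleR_right: "A o\<^sub>L (b *\<^sub>R B) = b *\<^sub>R (A o\<^sub>L B)"
  by (auto intro: blinfun_eqI simp: blinfun.bilinear_simps)

primrec blinfun_pow :: "('a::real_normed_vector \<Rightarrow>\<^sub>L 'a) \<Rightarrow> nat \<Rightarrow> 'a \<Rightarrow>\<^sub>L 'a" where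
  "blinfun_pow R 0 = id_blinfun"
| "blinfun_pow R (Suc k) = R o\<^sub>L blinfun_pow R k"

lemma blinfun_pow_add: "blinfun_pow R i o\<^sub>L blinfun_pow R j = blinfun_pow R (i + j)"
proof -
  have "blinfun_pow R (i + j) x = blinfun_pow R i (blinfun_pow R j x)" for x
    by (induction i) auto
  then show ?thesis
    by (auto intro: blinfun_eqI)
qed

lemma blinfun_pow_commute:
  assumes "X o\<^sub>L R = R o\<^sub>L X"
  shows "X o\<^sub>L blinfun_pow R k = blinfun_pow R k o\<^sub>L X"
proof (induction k)
  case (Suc k)
  have "X (R z) = R (X z)" and "X (blinfun_pow R k z) = blinfun_pow R k (X z)" for z
    using assms Suc by (metis blinfun_apply_blinfun_compose)+
  then show ?case
    by (auto intro: blinfun_eqI)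
qed (auto intro: blinfun_eqI)

lemma norm_blinfun_pow_le_one:
  assumes "norm R \<le> 1"
  shows "norm (blinfun_pow R k) \<le> 1"
proof (induction k)
  case (Suc k)
  have "norm (R o\<^sub>L blinfun_pow R k) \<le> norm R * norm (blinfun_pow R k)"
    by (rule norm_blinfun_compose)
  also have "\<dots> \<le> 1"
    using assms Suc by (simp add: mult_le_one)
  finally show ?case by simp
qed (simp add: norm_blinfun_id_le)

lemma selfadjoint_blinfun_pow:
  assumes "selfadjoint R"
  shows "selfadjoint (blinfun_pow R k)"
proof (induction k)
  case (Suc k)
  have "blinfun_pow R k (R y) = R (blinfun_pow R k y)" for y
    using blinfun_pow_commute[of R R k] by (metis blinfun_apply_blinfun_compose)
  with Suc assms show ?case
    by (simp add: selfadjoint_def)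
qed (simp add: selfadjoint_def)

definition sqrt_one_minus :: "('a::real_normed_vector \<Rightarrow>\<^sub>L 'a) \<Rightarrow> 'a \<Rightarrow>\<^sub>L 'a" where
  "sqrt_one_minus R = (\<Sum>k. sqrt_coeff k *\<^sub>R blinfun_pow R k)"

lemma summable_norm_sqrt_one_minus:
  assumes "norm R \<le> 1"
  shows "summable (\<lambda>k. norm (sqrt_coeff k *\<^sub>R blinfun_pow R k))"
proof (rule summable_comparison_test'[OF summable_abs_sqrt_coeff])
  fix k
  show "norm (norm (sqrt_coeff k *\<^sub>R blinfun_pow R k)) \<le> \<bar>sqrt_coeff k\<bar>"
    using norm_blinfun_pow_le_one[OF assms, of k] by (simp add: mult_left_le)
qed

lemma sqrt_one_minus_square:
  fixes R :: "'a::banach \<Rightarrow>\<^sub>L 'a"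
  assumes "norm R \<le> 1"
  shows "sqrt_one_minus R o\<^sub>L sqrt_one_minus R = id_blinfun - R"
proof -
  let ?a = "\<lambda>k. sqrt_coeff k *\<^sub>R blinfun_pow R k"
  let ?e = "\<lambda>k::nat. if k = 0 then 1 else if k = 1 then -1 else (0::real)"
  have "(\<lambda>k. \<Sum>i\<le>k. ?a i o\<^sub>L ?a (k - i)) sums (sqrt_one_minus R o\<^sub>L sqrt_one_minus R)"
    unfolding sqrt_one_minus_def
    by (intro bounded_bilinear_Cauchy_product_sums bounded_bilinear_blinfun_compose
        summable_norm_sqrt_one_minus assms)
  moreover have "(\<Sum>i\<le>k. ?a i o\<^sub>L ?a (k - i)) = ?e k *\<^sub>R blinfun_pow R k" for k
  proof -
    have "(\<Sum>i\<le>k. ?a i o\<^sub>L ?a (k - i)) = (\<Sum>i\<le>k. (sqrt_coeff i * sqrt_coeff (k - i)) *\<^sub>R blinfun_pow R k)"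
      by (intro sum.cong refl)
        (simp add: blinfun_pow_add blinfun_compose_scaleR_left blinfun_compose_scaleR_right)
    then show ?thesis
      by (simp add: scaleR_sum_left[symmetric] sqrt_coeff_Cauchy_square)
  qed
  ultimately have "(\<lambda>k. ?e k *\<^sub>R blinfun_pow R k) sums (sqrt_one_minus R o\<^sub>L sqrt_one_minus R)"
    by simp
  moreover have "(\<lambda>k. ?e k *\<^sub>R blinfun_pow R k) sums (\<Sum>k\<in>{0, 1}. ?e k *\<^sub>R blinfun_pow R k)"
    by (rule sums_finite) auto
  ultimately show ?thesis
    by (auto dest: sums_unique2 intro!: blinfun_eqI simp: blinfun.bilinear_simps)
qed

lemma sqrt_one_minus_commute:
  fixes R :: "'a::banach \<Rightarrow>\<^sub>L 'a"
  assumes "norm R \<le> 1" and "X o\<^sub>L R = R o\<^sub>L X"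
  shows "X o\<^sub>L sqrt_one_minus R = sqrt_one_minus R o\<^sub>L X"
proof -
  have summable: "summable (\<lambda>k. sqrt_coeff k *\<^sub>R blinfun_pow R k)"
    by (rule summable_norm_cancel[OF summable_norm_sqrt_one_minus[OF assms(1)]])
  have "X o\<^sub>L sqrt_one_minus R = (\<Sum>k. X o\<^sub>L (sqrt_coeff k *\<^sub>R blinfun_pow R k))"
    unfolding sqrt_one_minus_def
    by (rule bounded_linear.suminf[OF bounded_bilinear.bounded_linear_right[OF
          bounded_bilinear_blinfun_compose] summable])
  also have "\<dots> = (\<Sum>k. (sqrt_coeff k *\<^sub>R blinfun_pow R k) o\<^sub>L X)"
    using blinfun_pow_commute[OF assms(2)]
    by (simp add: blinfun_compose_scaleR_left blinfun_compose_scaleR_right)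
  also have "\<dots> = sqrt_one_minus R o\<^sub>L X"
    unfolding sqrt_one_minus_def
    by (rule bounded_linear.suminf[OF bounded_bilinear.bounded_linear_left[OF
          bounded_bilinear_blinfun_compose] summable, symmetric])
  finally show ?thesis .
qed

lemma inner_sqrt_one_minus:
  fixes R :: "'a::{real_inner, banach} \<Rightarrow>\<^sub>L 'a"
  assumes "norm R \<le> 1"
  shows "inner (sqrt_one_minus R x) y = (\<Sum>k. sqrt_coeff k * inner (blinfun_pow R k x) y)"
proof -
  have "bounded_linear (\<lambda>F. inner (blinfun_apply F x) y)"
    by (intro bounded_linear_compose[OF bounded_linear_inner_left]
        bounded_bilinear.bounded_linear_left[OF bounded_bilinear_blinfun_apply])
  from bounded_linear.suminf[OF this summable_norm_cancel[OF summable_norm_sqrt_one_minus[OF assms]]]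
  show ?thesis
    by (simp add: sqrt_one_minus_def blinfun.bilinear_simps)
qed

lemma abs_inner_blinfun_pow_le:
  fixes R :: "'a::real_inner \<Rightarrow>\<^sub>L 'a"
  assumes "norm R \<le> 1"
  shows "\<bar>inner (blinfun_pow R k x) x\<bar> \<le> (norm x)\<^sup>2"
proof -
  have "\<bar>inner (blinfun_pow R k x) x\<bar> \<le> norm (blinfun_pow R k x) * norm x"
    by (rule Cauchy_Schwarz_ineq2)
  also have "\<dots> \<le> norm (blinfun_pow R k) * norm x * norm x"
    by (intro mult_right_mono norm_blinfun) simp
  also have "\<dots> \<le> 1 * norm x * norm x"
    by (intro mult_right_mono norm_blinfun_pow_le_one assms) simp_all
  finally show ?thesis
    by (simp add: power2_eq_square)
qed

lemma selfadjoint_sqrt_one_minus: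
  fixes R :: "'a::{real_inner, banach} \<Rightarrow>\<^sub>L 'a"
  assumes "selfadjoint R" "norm R \<le> 1"
  shows "selfadjoint (sqrt_one_minus R)"
  unfolding selfadjoint_def
proof (intro allI)
  fix x y
  have "inner (blinfun_pow R k x) y = inner (blinfun_pow R k y) x" for k
    using selfadjoint_blinfun_pow[OF assms(1)] by (simp add: selfadjoint_def inner_commute)
  then show "inner (sqrt_one_minus R x) y = inner x (sqrt_one_minus R y)"
    by (simp add: inner_sqrt_one_minus[OF assms(2)] inner_commute[of x])
qed

text \<open>The constant term \<open>\<parallel>x\<parallel>\<^sup>2\<close> dominates the remaining terms, whose coefficients are
  nonpositive and sum to at least \<open>-1\<close>.\<close>

lemma inner_sqrt_one_minus_nonneg:
  fixes R :: "'a::{real_inner, banach} \<Rightarrow>\<^sub>L 'a"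
  assumes R: "norm R \<le> 1"
  shows "0 \<le> inner (sqrt_one_minus R x) x"
proof -
  let ?t = "\<lambda>k. sqrt_coeff k * inner (blinfun_pow R k x) x"
  have tail_summable: "summable (\<lambda>k. \<bar>sqrt_coeff (Suc k)\<bar> * (norm x)\<^sup>2)"
    by (intro summable_mult2 summable_abs_sqrt_coeff_Suc)
  have summable_t: "summable ?t"
    by (rule summable_comparison_test'[where g="\<lambda>k. \<bar>sqrt_coeff k\<bar> * (norm x)\<^sup>2"])
      (auto simp: abs_mult intro: summable_mult2 summable_abs_sqrt_coeff mult_left_mono
        abs_inner_blinfun_pow_le[OF R])
  have "- (\<Sum>k. \<bar>sqrt_coeff (Suc k)\<bar> * (norm x)\<^sup>2) \<le> (\<Sum>k. ?t (Suc k))"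
    unfolding suminf_minus[OF tail_summable, symmetric]
  proof (rule suminf_le)
    show "- (\<bar>sqrt_coeff (Suc k)\<bar> * (norm x)\<^sup>2) \<le> ?t (Suc k)" for k
    proof -
      have "\<bar>?t (Suc k)\<bar> \<le> \<bar>sqrt_coeff (Suc k)\<bar> * (norm x)\<^sup>2"
        unfolding abs_mult by (intro mult_left_mono abs_inner_blinfun_pow_le[OF R]) simp
      then show ?thesis
        by (metis abs_le_D2 minus_le_iff)
    qed
  qed (rule summable_minus[OF tail_summable], rule summable_Suc_iff[THEN iffD2, OF summable_t])
  also have "(\<Sum>k. ?t (Suc k)) = inner (sqrt_one_minus R x) x - (norm x)\<^sup>2"
    using suminf_split_head[OF summable_t] by (simp add: inner_sqrt_one_minus[OF R] power2_norm_eq_inner)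
  finally have "(norm x)\<^sup>2 - (\<Sum>k. \<bar>sqrt_coeff (Suc k)\<bar>) * (norm x)\<^sup>2 \<le> inner (sqrt_one_minus R x) x"
    by (simp add: suminf_mult2[OF summable_abs_sqrt_coeff_Suc])
  moreover have "(\<Sum>k. \<bar>sqrt_coeff (Suc k)\<bar>) * (norm x)\<^sup>2 \<le> (norm x)\<^sup>2"
    by (intro mult_left_le_one_le suminf_abs_sqrt_coeff_Suc_le suminf_nonneg summable_abs_sqrt_coeff_Suc)
      simp_all
  ultimately show ?thesis
    by linarith
qed

lemma positive_op_sqrt_one_minus:
  fixes R :: "'a::{real_inner, banach} \<Rightarrow>\<^sub>L 'a"
  shows "selfadjoint R \<Longrightarrow> norm R \<le> 1 \<Longrightarrow> positive_op (sqrt_one_minus R)"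
  by (simp add: positive_op_def selfadjoint_sqrt_one_minus inner_sqrt_one_minus_nonneg)

lemma id_minus_scaled_positive_op:
  assumes T: "positive_op T" and l: "norm T \<le> l" "0 < l"
  shows "selfadjoint (id_blinfun - (1/l) *\<^sub>R T)" "norm (id_blinfun - (1/l) *\<^sub>R T) \<le> 1"
proof -
  let ?R = "id_blinfun - (1/l) *\<^sub>R T"
  have R_apply: "?R x = x - (1/l) *\<^sub>R T x" for x
    by (simp add: blinfun.bilinear_simps)
  have T_sym: "inner (T x) y = inner x (T y)" and T_nonneg: "0 \<le> inner (T x) x" for x y
    using T by (auto simp: positive_op_def selfadjoint_def)
  have "inner (T x) x \<le> l * (norm x)\<^sup>2" for x
  proof -
    have "inner (T x) x \<le> norm (T x) * norm x"
      by (rule norm_cauchy_schwarz)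
    also have "\<dots> \<le> norm T * norm x * norm x"
      by (intro mult_right_mono norm_blinfun) simp
    also have "\<dots> \<le> l * (norm x)\<^sup>2"
      unfolding power2_eq_square mult.assoc using l(1) by (rule mult_right_mono) simp
    finally show ?thesis .
  qed
  with l(2) have "(1/l) * inner (T x) x \<le> inner x x" for x
    by (simp add: field_simps power2_norm_eq_inner)
  then have "positive_op ?R"
    by (simp add: positive_op_def selfadjoint_def R_apply inner_diff_left inner_diff_right T_sym)
  moreover have "positive_op (id_blinfun - ?R)"
    using T_nonneg l(2) by (simp add: positive_op_def selfadjoint_def blinfun.bilinear_simps T_sym)
  ultimately show "selfadjoint ?R" "norm ?R \<le> 1"
    by (auto intro: positive_op_norm_le_one simp: positive_op_def)
qed

text \<open>With \<open>l = \<parallel>T\<parallel> + 1\<close> and \<open>R = 1 - T/l\<close>, the operator \<open>\<surd>l \<surd>(1 - R)\<close> is a positive square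
  root of \<open>T\<close> that commutes with everything commuting with \<open>T\<close>.\<close>

lemma positive_op_sqrt_exists:
  fixes T :: "'a::{real_inner, banach} \<Rightarrow>\<^sub>L 'a"
  assumes T: "positive_op T"
  shows "\<exists>S. positive_op S \<and> S o\<^sub>L S = T \<and> (\<forall>X. X o\<^sub>L T = T o\<^sub>L X \<longrightarrow> X o\<^sub>L S = S o\<^sub>L X)"
proof -
  define l where "l = norm T + 1"
  have l: "norm T \<le> l" "0 < l"
    by (simp_all add: l_def add_nonneg_pos)
  define R where "R = id_blinfun - (1/l) *\<^sub>R T"
  have R: "selfadjoint R" "norm R \<le> 1"
    unfolding R_def by (rule id_minus_scaled_positive_op[OF T l])+
  define S where "S = sqrt l *\<^sub>R sqrt_one_minus R"
  have "positive_op S"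
    using positive_op_sqrt_one_minus[OF R] l
    by (auto simp: positive_op_def selfadjoint_def S_def blinfun.bilinear_simps)
  moreover have "S o\<^sub>L S = T"
  proof -
    have "S o\<^sub>L S = l *\<^sub>R (id_blinfun - R)"
      using l by (simp add: S_def blinfun_compose_scaleR_left blinfun_compose_scaleR_right
          sqrt_one_minus_square[OF R(2)])
    also have "\<dots> = T"
      using l by (auto intro!: blinfun_eqI simp: R_def blinfun.bilinear_simps)
    finally show ?thesis .
  qed
  moreover have "X o\<^sub>L S = S o\<^sub>L X" if "X o\<^sub>L T = T o\<^sub>L X" for X
  proof -
    have "X o\<^sub>L R = R o\<^sub>L X"
      using arg_cong[OF that, of blinfun_apply]
      by (auto intro!: blinfun_eqI simp: R_def blinfun.bilinear_simps dest: fun_cong)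
    then show ?thesis
      using sqrt_one_minus_commute[OF R(2)]
      by (simp add: S_def blinfun_compose_scaleR_left blinfun_compose_scaleR_right)
  qed
  ultimately show ?thesis
    by blast
qed

text \<open>If \<open>S'\<close> is another positive square root, it commutes with \<open>S'\<^sup>2 = S\<^sup>2\<close> and hence with \<open>S\<close>;
  then \<open>y = S x - S' x\<close> satisfies \<open>(S + S') y = 0\<close>, so \<open>S y = S' y = 0\<close> and
  \<open>\<parallel>y\<parallel>\<^sup>2 = \<langle>x, (S - S') y\<rangle> = 0\<close>.\<close>

lemma positive_op_sqrt_unique:
  fixes S S' :: "'a::real_inner \<Rightarrow>\<^sub>L 'a"
  assumes S: "positive_op S" and S': "positive_op S'" and square: "S' o\<^sub>L S' = S o\<^sub>L S"
    and commute: "\<forall>X. X o\<^sub>L (S o\<^sub>L S) = (S o\<^sub>L S) o\<^sub>L X \<longrightarrow> X o\<^sub>L S = S o\<^sub>L X"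
  shows "S' = S"
proof (rule blinfun_eqI)
  fix x
  have "S' o\<^sub>L (S o\<^sub>L S) = (S o\<^sub>L S) o\<^sub>L S'"
    unfolding square[symmetric] by (auto intro: blinfun_eqI)
  then have "S' o\<^sub>L S = S o\<^sub>L S'"
    using commute by blast
  then have SS': "S' (S z) = S (S' z)" for z
    by (metis blinfun_apply_blinfun_compose)
  have S'S': "S' (S' z) = S (S z)" for z
    using square by (metis blinfun_apply_blinfun_compose)
  define y where "y = S x - S' x"
  have "S y + S' y = 0"
    by (simp add: y_def blinfun.bilinear_simps SS' S'S')
  then have "inner (S y) y + inner (S' y) y = 0"
    by (metis inner_add_left inner_zero_left)
  moreover have "inner (S y) y \<ge> 0" "inner (S' y) y \<ge> 0"
    using S S' by (auto simp: positive_op_def)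
  ultimately have "S y = 0" "S' y = 0"
    using positive_op_zero S S' by (metis add_nonneg_eq_0_iff)+
  moreover have "inner (S x - S' x) z = inner x (S z - S' z)" for z
    using S S' by (simp add: inner_diff_left inner_diff_right positive_op_def selfadjoint_def)
  then have "inner y y = inner x (S y - S' y)"
    unfolding y_def .
  ultimately show "S' x = S x"
    by (simp add: y_def)
qed

lemma positive_op_sqrt_ex1:
  fixes T :: "'a::{real_inner, banach} \<Rightarrow>\<^sub>L 'a"
  assumes "positive_op T"
  shows "\<exists>!S. positive_op S \<and> S o\<^sub>L S = T"
proof -
  from positive_op_sqrt_exists[OF assms] obtain S where S: "positive_op S" "S o\<^sub>L S = T"
    and commute: "\<forall>X. X o\<^sub>L T = T o\<^sub>L X \<longrightarrow> X o\<^sub>L S = S o\<^sub>L X"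
    by (elim exE conjE)
  show ?thesis
  proof (rule ex1I[of _ S])
    show "positive_op S \<and> S o\<^sub>L S = T"
      using S by (rule conjI)
    show "S' = S" if S': "positive_op S' \<and> S' o\<^sub>L S' = T" for S'
    proof (rule positive_op_sqrt_unique[OF S(1)])
      show "positive_op S'" "S' o\<^sub>L S' = S o\<^sub>L S"
        using S' S(2) by simp_all
      show "\<forall>X. X o\<^sub>L (S o\<^sub>L S) = (S o\<^sub>L S) o\<^sub>L X \<longrightarrow> X o\<^sub>L S = S o\<^sub>L X"
        unfolding S(2) by (rule commute)
    qed
  qed
qed

section \<open>The Hilbert space \<open>\<ell>\<^sup>2\<close>\<close>

lemma l2_iff_summable: "u \<in> l2 \<longleftrightarrow> u 0 = 0 \<and> summable (\<lambda>n. (u n)\<^sup>2)"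
proof -
  have "u 0 = 0 \<Longrightarrow> (\<lambda>n. (u n)\<^sup>2) summable_on {1..} \<longleftrightarrow> (\<lambda>n. (u n)\<^sup>2) summable_on UNIV"
    by (rule summable_on_cong_neutral) (auto simp: not_le)
  then show ?thesis
    unfolding l2_def using summable_on_UNIV_nonneg_real_iff[of "\<lambda>n. (u n)\<^sup>2"] by auto
qed

lemma has_sum_atLeast1_suminf:
  fixes f :: "nat \<Rightarrow> real"
  assumes "f 0 = 0" and "summable (\<lambda>n. \<bar>f n\<bar>)"
  shows "(f has_sum suminf f) {1..}"
proof -
  have "(f has_sum suminf f) UNIV"
    using assms(2) by (simp add: norm_summable_imp_has_sum summable_sums summable_rabs_cancel)
  moreover have "(f has_sum suminf f) {1..} \<longleftrightarrow> (f has_sum suminf f) UNIV"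
    by (rule has_sum_cong_neutral) (use assms(1) in \<open>auto simp: not_le\<close>)
  ultimately show ?thesis
    by simp
qed

lemma summable_abs_mult_l2:
  assumes "u \<in> l2" "v \<in> l2"
  shows "summable (\<lambda>n. \<bar>u n * v n\<bar>)"
proof (rule summable_comparison_test'[where g="\<lambda>n. (u n)\<^sup>2 + (v n)\<^sup>2"])
  show "summable (\<lambda>n. (u n)\<^sup>2 + (v n)\<^sup>2)"
    using assms by (intro summable_add) (auto simp: l2_iff_summable)
  show "norm (\<bar>u n * v n\<bar>) \<le> (u n)\<^sup>2 + (v n)\<^sup>2" for n
  proof -
    have "2 * (\<bar>u n\<bar> * \<bar>v n\<bar>) \<le> (u n)\<^sup>2 + (v n)\<^sup>2"
      using sum_squares_bound[of "\<bar>u n\<bar>" "\<bar>v n\<bar>"] by (simp add: mult.assoc)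
    moreover have "0 \<le> \<bar>u n\<bar> * \<bar>v n\<bar>"
      by simp
    ultimately show ?thesis
      unfolding real_norm_def abs_abs abs_mult by linarith
  qed
qed

lemma l2inner_eq_suminf: "u \<in> l2 \<Longrightarrow> v \<in> l2 \<Longrightarrow> l2inner u v = (\<Sum>n. u n * v n)"
  unfolding l2inner_def
  by (intro infsumI has_sum_atLeast1_suminf summable_abs_mult_l2) (auto simp: l2_iff_summable)

lemma l2norm_eq_sqrt_suminf: "u \<in> l2 \<Longrightarrow> l2norm u = sqrt (\<Sum>n. (u n)\<^sup>2)"
  unfolding l2norm_def by (subst infsumI[OF has_sum_atLeast1_suminf]) (auto simp: l2_iff_summable)

lemma l2norm_square: "u \<in> l2 \<Longrightarrow> (l2norm u)\<^sup>2 = l2inner u u"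
  by (simp add: l2norm_eq_sqrt_suminf l2inner_eq_suminf power2_eq_square[symmetric] l2_iff_summable
      suminf_nonneg)

lemma l2_zero: "(\<lambda>n. 0) \<in> l2"
  by (simp add: l2_iff_summable)

lemma l2_scale: "u \<in> l2 \<Longrightarrow> (\<lambda>n. a * u n) \<in> l2"
  by (auto simp: l2_iff_summable power_mult_distrib intro: summable_mult)

lemma l2_add:
  assumes "u \<in> l2" "v \<in> l2"
  shows "(\<lambda>n. u n + v n) \<in> l2"
proof -
  have "summable (\<lambda>n. (u n + v n)\<^sup>2)"
  proof (rule summable_comparison_test'[where g="\<lambda>n. 2 * (u n)\<^sup>2 + 2 * (v n)\<^sup>2"])
    show "summable (\<lambda>n. 2 * (u n)\<^sup>2 + 2 * (v n)\<^sup>2)"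
      using assms by (intro summable_add summable_mult) (auto simp: l2_iff_summable)
    show "norm ((u n + v n)\<^sup>2) \<le> 2 * (u n)\<^sup>2 + 2 * (v n)\<^sup>2" for n
    proof -
      have "(u n + v n)\<^sup>2 \<le> 2 * (u n)\<^sup>2 + 2 * (v n)\<^sup>2"
        using sum_squares_bound[of "u n" "v n"] by (simp add: power2_sum)
      then show ?thesis
        by simp
    qed
  qed
  with assms show ?thesis
    by (simp add: l2_iff_summable)
qed

lemma l2_lincomb: "u \<in> l2 \<Longrightarrow> v \<in> l2 \<Longrightarrow> (\<lambda>n. a * u n + b * v n) \<in> l2"
  by (intro l2_add l2_scale)

text \<open>The set \<open>l2\<close> as a type, so that the operator theory above, stated for the classes
  \<open>real_inner\<close> and \<open>banach\<close>, applies to it.\<close>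

typedef ell = l2 morphisms el mkell
  using l2_zero by blast

setup_lifting type_definition_ell

instantiation ell :: real_vector
begin

lift_definition zero_ell :: ell is "\<lambda>n. 0"
  by (rule l2_zero)

lift_definition plus_ell :: "ell \<Rightarrow> ell \<Rightarrow> ell" is "\<lambda>u v n. u n + v n"
  by (rule l2_add)

lift_definition uminus_ell :: "ell \<Rightarrow> ell" is "\<lambda>u n. - u n"
  using l2_scale[of _ "-1"] by simp

lift_definition minus_ell :: "ell \<Rightarrow> ell \<Rightarrow> ell" is "\<lambda>u v n. u n - v n"
  using l2_lincomb[of _ _ 1 "-1"] by simp

lift_definition scaleR_ell :: "real \<Rightarrow> ell \<Rightarrow> ell" is "\<lambda>a u n. a * u n"
  by (rule l2_scale)

instance
  by intro_classes (transfer; auto simp: algebra_simps)+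

end

lemma summable_el_mult: "summable (\<lambda>n. el x n * el y n)"
  using summable_abs_mult_l2[OF el el] by (rule summable_rabs_cancel)

instantiation ell :: real_inner
begin

lift_definition inner_ell :: "ell \<Rightarrow> ell \<Rightarrow> real" is "\<lambda>u v. \<Sum>n. u n * v n" .

definition norm_ell :: "ell \<Rightarrow> real" where
  "norm_ell x = sqrt (inner x x)"

definition sgn_ell :: "ell \<Rightarrow> ell" where
  "sgn_ell x = x /\<^sub>R norm x"

definition dist_ell :: "ell \<Rightarrow> ell \<Rightarrow> real" where
  "dist_ell x y = norm (x - y)"

definition uniformity_ell :: "(ell \<times> ell) filter" where
  "uniformity_ell = (INF e\<in>{0<..}. principal {(x, y). dist x y < e})"

definition open_ell :: "ell set \<Rightarrow> bool" where
  "open_ell U = (\<forall>x\<in>U. \<forall>\<^sub>F (x', y) in uniformity. x' = x \<longrightarrow> y \<in> U)"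

instance
proof
  fix x y z :: ell and r :: real
  show "inner x y = inner y x"
    by transfer (simp add: mult.commute)
  show "inner (x + y) z = inner x z + inner y z"
    by (simp add: inner_ell.rep_eq plus_ell.rep_eq distrib_right suminf_add[OF summable_el_mult summable_el_mult])
  show "inner (r *\<^sub>R x) y = r * inner x y"
    by (simp add: inner_ell.rep_eq scaleR_ell.rep_eq mult.assoc suminf_mult[OF summable_el_mult])
  show "0 \<le> inner x x"
    by (simp add: inner_ell.rep_eq suminf_nonneg[OF summable_el_mult])
  have "inner x x = 0 \<longleftrightarrow> (\<forall>n. el x n * el x n = 0)"
    unfolding inner_ell.rep_eq by (rule suminf_eq_zero_iff[OF summable_el_mult]) simp
  then show "inner x x = 0 \<longleftrightarrow> x = 0"
    by (auto simp: el_inject[symmetric] zero_ell.rep_eq)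
qed (rule norm_ell_def sgn_ell_def dist_ell_def uniformity_ell_def open_ell_def)+

end

lemma inner_ell_eq_l2inner: "inner x y = l2inner (el x) (el y)"
  by (simp add: inner_ell.rep_eq l2inner_eq_suminf el)

lemma norm_ell_eq_l2norm: "norm x = l2norm (el x)"
  by (simp add: norm_eq_sqrt_inner inner_ell.rep_eq l2norm_eq_sqrt_suminf el power2_eq_square)

lemma norm_ell_square: "(norm x)\<^sup>2 = (\<Sum>n. (el x n)\<^sup>2)"
  unfolding power2_norm_eq_inner by (simp add: inner_ell.rep_eq power2_eq_square)

lemma abs_el_le_norm: "\<bar>el x n\<bar> \<le> norm x"
proof -
  have "(el x n)\<^sup>2 \<le> (\<Sum>n. (el x n)\<^sup>2)"
    using sum_le_suminf[of "\<lambda>n. (el x n)\<^sup>2" "{n}"] el[of x] by (simp add: l2_iff_summable)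
  then show ?thesis
    using abs_le_square_iff[of "el x n" "norm x"] by (simp add: norm_ell_square)
qed

lemma summable_suminf_le_of_pointwise_limit:
  fixes h :: "nat \<Rightarrow> nat \<Rightarrow> real"
  assumes lim: "\<And>n. (\<lambda>l. h l n) \<longlonglongrightarrow> v n" and nonneg: "\<And>l n. 0 \<le> h l n"
    and bound: "\<forall>\<^sub>F l in sequentially. summable (h l) \<and> suminf (h l) \<le> B"
  shows "summable v" "suminf v \<le> B"
proof -
  have partial: "(\<Sum>n<N. v n) \<le> B" for N
  proof (rule tendsto_le[OF _ tendsto_const tendsto_sum[OF lim]])
    show "\<forall>\<^sub>F l in sequentially. (\<Sum>n<N. h l n) \<le> B"
      using bound by eventually_elim (meson sum_le_suminf nonneg finite_lessThan order_trans)
  qed simp_all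
  have "0 \<le> v n" for n
    by (rule tendsto_lowerbound[OF lim]) (simp_all add: nonneg)
  with partial show "summable v"
    by (intro summableI_nonneg_bounded)
  with partial show "suminf v \<le> B"
    by (intro suminf_le_const)
qed

lemma Cauchy_el:
  assumes "Cauchy X"
  shows "Cauchy (\<lambda>k. el (X k) n)"
proof (rule CauchyI)
  fix e :: real assume "e > 0"
  with assms obtain M where M: "\<forall>m\<ge>M. \<forall>k\<ge>M. norm (X m - X k) < e"
    by (meson CauchyD)
  have "norm (el (X m) n - el (X k) n) < e" if "M \<le> m" "M \<le> k" for m k
    using abs_el_le_norm[of "X m - X k" n] M that by (force simp: minus_ell.rep_eq)
  then show "\<exists>M. \<forall>m\<ge>M. \<forall>k\<ge>M. norm (el (X m) n - el (X k) n) < e"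
    by blast
qed

lemma Cauchy_ell_tail:
  assumes Cauchy: "Cauchy X" and v: "\<And>n. (\<lambda>k. el (X k) n) \<longlonglongrightarrow> v n" and "e > 0"
  shows "\<exists>K. \<forall>k\<ge>K. summable (\<lambda>n. (el (X k) n - v n)\<^sup>2) \<and> (\<Sum>n. (el (X k) n - v n)\<^sup>2) \<le> e\<^sup>2"
proof -
  obtain K where K: "\<forall>m\<ge>K. \<forall>k\<ge>K. norm (X m - X k) < e"
    using Cauchy \<open>e > 0\<close> by (meson CauchyD)
  have "summable (\<lambda>n. (el (X k) n - v n)\<^sup>2) \<and> (\<Sum>n. (el (X k) n - v n)\<^sup>2) \<le> e\<^sup>2" if "K \<le> k" for k
  proof -
    have "\<forall>\<^sub>F l in sequentially. summable (\<lambda>n. (el (X k) n - el (X l) n)\<^sup>2) \<and>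
        (\<Sum>n. (el (X k) n - el (X l) n)\<^sup>2) \<le> e\<^sup>2"
      unfolding eventually_sequentially
    proof (intro exI[of _ K] allI impI conjI)
      fix l assume "K \<le> l"
      with K \<open>K \<le> k\<close> have "(norm (X k - X l))\<^sup>2 \<le> e\<^sup>2"
        by (intro power_mono) (auto intro: less_imp_le)
      then show "(\<Sum>n. (el (X k) n - el (X l) n)\<^sup>2) \<le> e\<^sup>2"
        by (simp add: norm_ell_square minus_ell.rep_eq)
      show "summable (\<lambda>n. (el (X k) n - el (X l) n)\<^sup>2)"
        using el[of "X k - X l"] by (simp add: l2_iff_summable minus_ell.rep_eq)
    qed
    moreover have "(\<lambda>l. (el (X k) n - el (X l) n)\<^sup>2) \<longlonglongrightarrow> (el (X k) n - v n)\<^sup>2" for n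
      by (intro tendsto_intros v)
    ultimately show ?thesis
      using summable_suminf_le_of_pointwise_limit[where h="\<lambda>l n. (el (X k) n - el (X l) n)\<^sup>2"]
      by simp
  qed
  then show ?thesis
    by blast
qed

instance ell :: banach
proof
  fix X :: "nat \<Rightarrow> ell"
  assume Cauchy: "Cauchy X"
  then obtain v where v: "\<And>n. (\<lambda>k. el (X k) n) \<longlonglongrightarrow> v n"
    using Cauchy_el unfolding Cauchy_convergent_iff convergent_def by metis
  note tail = Cauchy_ell_tail[OF Cauchy v]
  obtain K where K: "summable (\<lambda>n. (el (X K) n - v n)\<^sup>2)"
    using tail[of 1] by auto
  have "v 0 = 0"
    using LIMSEQ_unique[OF v[of 0]] el by (simp add: l2_iff_summable)
  moreover have "(\<lambda>n. el (X K) n - (el (X K) n - v n)) \<in> l2"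
    using l2_lincomb[of "el (X K)" "\<lambda>n. el (X K) n - v n" 1 "-1"] el K \<open>v 0 = 0\<close>
    by (simp add: l2_iff_summable)
  ultimately have v_l2: "v \<in> l2"
    by simp
  have "X \<longlonglongrightarrow> mkell v"
  proof (rule LIMSEQ_I)
    fix r :: real assume "r > 0"
    then obtain K where K: "\<forall>k\<ge>K. (\<Sum>n. (el (X k) n - v n)\<^sup>2) \<le> (r/2)\<^sup>2"
      using tail[of "r/2"] by auto
    have "norm (X k - mkell v) \<le> r/2" if "K \<le> k" for k
    proof -
      have "(norm (X k - mkell v))\<^sup>2 \<le> (r/2)\<^sup>2"
        using K that by (simp add: norm_ell_square minus_ell.rep_eq mkell_inverse[OF v_l2])
      then show ?thesis
        using \<open>r > 0\<close> by (simp add: power2_le_iff_abs_le)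
    qed
    then show "\<exists>K. \<forall>k\<ge>K. norm (X k - mkell v) < r"
      using \<open>r > 0\<close> by (metis half_gt_zero less_add_same_cancel1 field_sum_of_halves le_less_trans)
  qed
  then show "convergent X"
    by (rule convergentI)
qed

lemma l2norm_nonneg: "0 \<le> l2norm u"
  by (simp add: l2norm_def infsum_nonneg)

lemma norm_mkell: "u \<in> l2 \<Longrightarrow> norm (mkell u) = l2norm u"
  by (simp add: norm_ell_eq_l2norm mkell_inverse)

lemma mkell_lincomb:
  assumes "u \<in> l2" "v \<in> l2"
  shows "mkell (\<lambda>n. a * u n + b * v n) = a *\<^sub>R mkell u + b *\<^sub>R mkell v"
  by (rule el_inject[THEN iffD1])
    (simp add: assms l2_lincomb mkell_inverse plus_ell.rep_eq scaleR_ell.rep_eq)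

definition l2_op :: "(ell \<Rightarrow>\<^sub>L ell) \<Rightarrow> (nat \<Rightarrow> real) \<Rightarrow> nat \<Rightarrow> real" where
  "l2_op T u = el (T (mkell u))"

lemma bounded_linear_l2_l2_op: "bounded_linear_l2 (l2_op T)"
  unfolding bounded_linear_l2_def l2_op_def
proof (intro conjI ballI allI exI)
  show "el (T (mkell u)) \<in> l2" for u
    by (rule el)
  show "el (T (mkell (\<lambda>n. a * u n + b * v n))) = (\<lambda>n. a * el (T (mkell u)) n + b * el (T (mkell v)) n)"
    if "u \<in> l2" "v \<in> l2" for u v a b
    using that by (simp add: mkell_lincomb blinfun.bilinear_simps plus_ell.rep_eq scaleR_ell.rep_eq)
  show "l2norm (el (T (mkell u))) \<le> norm T * l2norm u" if "u \<in> l2" for u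
    using norm_blinfun[of T "mkell u"] that by (simp add: norm_ell_eq_l2norm[symmetric] norm_mkell)
qed

lemma positive_l2_l2_op:
  assumes "positive_op T"
  shows "positive_l2 (l2_op T)"
proof -
  have sym: "inner (T x) y = inner x (T y)" and nonneg: "0 \<le> inner (T x) x" for x y
    using assms by (auto simp: positive_op_def selfadjoint_def)
  have "l2inner (l2_op T u) v = l2inner u (l2_op T v)" if "u \<in> l2" "v \<in> l2" for u v
    using sym[of "mkell u" "mkell v"] that by (simp add: l2_op_def inner_ell_eq_l2inner mkell_inverse)
  moreover have "0 \<le> l2inner (l2_op T u) u" if "u \<in> l2" for u
    using nonneg[of "mkell u"] that by (simp add: l2_op_def inner_ell_eq_l2inner mkell_inverse)
  ultimately show ?thesis
    using bounded_linear_l2_l2_op by (simp add: positive_l2_def)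
qed

definition blinfun_of_l2 :: "((nat \<Rightarrow> real) \<Rightarrow> nat \<Rightarrow> real) \<Rightarrow> ell \<Rightarrow>\<^sub>L ell" where
  "blinfun_of_l2 S = Blinfun (\<lambda>x. mkell (S (el x)))"

lemma bounded_linear_blinfun_of_l2:
  assumes "bounded_linear_l2 S"
  shows "bounded_linear (\<lambda>x. mkell (S (el x)))"
proof -
  from assms have S_l2: "\<And>u. u \<in> l2 \<Longrightarrow> S u \<in> l2"
    and S_lin: "\<And>u v a b. u \<in> l2 \<Longrightarrow> v \<in> l2 \<Longrightarrow> S (\<lambda>n. a * u n + b * v n) = (\<lambda>n. a * S u n + b * S v n)"
    and "\<exists>B. \<forall>u\<in>l2. l2norm (S u) \<le> B * l2norm u"
    by (auto simp: bounded_linear_l2_def)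
  then obtain B where B: "\<And>u. u \<in> l2 \<Longrightarrow> l2norm (S u) \<le> B * l2norm u"
    by blast
  show ?thesis
  proof (rule bounded_linear_intro[where K="max B 0"])
    fix x y :: ell and r :: real
    show "mkell (S (el (x + y))) = mkell (S (el x)) + mkell (S (el y))"
      using S_lin[OF el el, of 1 x 1 y] mkell_lincomb[OF S_l2[OF el] S_l2[OF el], of 1 x 1 y]
      by (simp add: plus_ell.rep_eq)
    show "mkell (S (el (r *\<^sub>R x))) = r *\<^sub>R mkell (S (el x))"
      using S_lin[OF el el, of r x 0 x] mkell_lincomb[OF S_l2[OF el] S_l2[OF el], of r x 0 x]
      by (simp add: scaleR_ell.rep_eq)
    have "norm (mkell (S (el x))) \<le> B * norm x"
      using B[OF el] S_l2[OF el] by (simp add: norm_ell_eq_l2norm mkell_inverse)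
    also have "\<dots> \<le> norm x * max B 0"
      by (subst mult.commute) (intro mult_right_mono; simp)
    finally show "norm (mkell (S (el x))) \<le> norm x * max B 0" .
  qed
qed

lemma el_blinfun_of_l2:
  assumes "bounded_linear_l2 S"
  shows "el (blinfun_of_l2 S x) = S (el x)"
  using assms bounded_linear_blinfun_of_l2[OF assms]
  by (simp add: blinfun_of_l2_def bounded_linear_Blinfun_apply mkell_inverse bounded_linear_l2_def el)

lemma positive_op_blinfun_of_l2:
  assumes "positive_l2 S"
  shows "positive_op (blinfun_of_l2 S)"
proof -
  have S_bl: "bounded_linear_l2 S"
    and sym: "\<And>u v. u \<in> l2 \<Longrightarrow> v \<in> l2 \<Longrightarrow> l2inner (S u) v = l2inner u (S v)"
    and nonneg: "\<And>u. u \<in> l2 \<Longrightarrow> 0 \<le> l2inner (S u) u"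
    using assms by (auto simp: positive_l2_def)
  show ?thesis
    unfolding positive_op_def selfadjoint_def inner_ell_eq_l2inner el_blinfun_of_l2[OF S_bl]
    using sym nonneg el by blast
qed

lemma positive_l2_cong:
  assumes eq: "\<And>u. u \<in> l2 \<Longrightarrow> S u = T u" and S: "positive_l2 S"
  shows "positive_l2 T"
proof -
  have S_l2: "\<And>u. u \<in> l2 \<Longrightarrow> S u \<in> l2"
    and S_lin: "\<And>u v a b. u \<in> l2 \<Longrightarrow> v \<in> l2 \<Longrightarrow> S (\<lambda>n. a * u n + b * v n) = (\<lambda>n. a * S u n + b * S v n)"
    and S_sym: "\<And>u v. u \<in> l2 \<Longrightarrow> v \<in> l2 \<Longrightarrow> l2inner (S u) v = l2inner u (S v)"
    and S_nonneg: "\<And>u. u \<in> l2 \<Longrightarrow> 0 \<le> l2inner (S u) u"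
    and "\<exists>B. \<forall>u\<in>l2. l2norm (S u) \<le> B * l2norm u"
    using S unfolding positive_l2_def bounded_linear_l2_def by blast+
  then obtain B where B: "\<And>u. u \<in> l2 \<Longrightarrow> l2norm (S u) \<le> B * l2norm u"
    by blast
  show ?thesis
    unfolding positive_l2_def bounded_linear_l2_def
  proof (intro conjI ballI allI exI)
    fix u v a b assume u: "u \<in> l2" and v: "v \<in> l2"
    show "T (\<lambda>n. a * u n + b * v n) = (\<lambda>n. a * T u n + b * T v n)"
      using eq[OF l2_lincomb[OF u v]] S_lin[OF u v] eq[OF u] eq[OF v] by simp
    show "l2inner (T u) v = l2inner u (T v)"
      using S_sym[OF u v] eq[OF u] eq[OF v] by simp
  next
    fix u assume u: "u \<in> l2"
    show "T u \<in> l2" "0 \<le> l2inner (T u) u" "l2norm (T u) \<le> B * l2norm u"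
      using S_l2[OF u] S_nonneg[OF u] B[OF u] eq[OF u] by simp_all
  qed
qed

lemma positive_l2_sqrt:
  assumes M: "positive_l2 M"
  shows "\<exists>S. positive_l2 S \<and> (\<forall>u\<in>l2. S (S u) = M u) \<and>
    (\<forall>S'. positive_l2 S' \<and> (\<forall>u\<in>l2. S' (S' u) = M u) \<longrightarrow> (\<forall>u\<in>l2. S' u = S u))"
proof -
  have M_bl: "bounded_linear_l2 M"
    using M by (simp add: positive_l2_def)
  obtain R where R: "positive_op R" "R o\<^sub>L R = blinfun_of_l2 M"
    and R_unique: "\<And>R'. positive_op R' \<Longrightarrow> R' o\<^sub>L R' = blinfun_of_l2 M \<Longrightarrow> R' = R"
    using positive_op_sqrt_ex1[OF positive_op_blinfun_of_l2[OF M]] by metis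
  have "l2_op R (l2_op R u) = M u" if "u \<in> l2" for u
    using arg_cong[OF R(2), of "\<lambda>F. el (F (mkell u))"] that
    by (simp add: l2_op_def el_inverse el_blinfun_of_l2[OF M_bl] mkell_inverse)
  moreover have "S' u = l2_op R u"
    if S': "positive_l2 S'" "\<forall>u\<in>l2. S' (S' u) = M u" and u: "u \<in> l2" for S' u
  proof -
    have S'_bl: "bounded_linear_l2 S'"
      using S' by (simp add: positive_l2_def)
    have "blinfun_of_l2 S' o\<^sub>L blinfun_of_l2 S' = blinfun_of_l2 M"
      using S'(2) S'_bl by (intro blinfun_eqI el_inject[THEN iffD1])
        (simp add: el_blinfun_of_l2[OF S'_bl] el_blinfun_of_l2[OF M_bl] el bounded_linear_l2_def)
    then have "blinfun_of_l2 S' = R"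
      by (intro R_unique positive_op_blinfun_of_l2 S'(1))
    then show ?thesis
      using el_blinfun_of_l2[OF S'_bl, of "mkell u"] u by (simp add: l2_op_def mkell_inverse)
  qed
  ultimately show ?thesis
    using positive_l2_l2_op[OF R(1)] by metis
qed

lemma l2norm_square_positive_l2:
  assumes "positive_l2 S" "u \<in> l2"
  shows "(l2norm (S u))\<^sup>2 = l2inner (S (S u)) u"
proof -
  have "S u \<in> l2"
    using assms by (simp add: positive_l2_def bounded_linear_l2_def)
  with assms show ?thesis
    by (simp add: l2norm_square positive_l2_def)
qed

lemma l2norm_sqrt_bounds:
  assumes S: "positive_l2 S" and u: "u \<in> l2" and ab: "0 \<le> a" "0 \<le> b" and d: "0 \<le> d"
    and bounds: "a * d\<^sup>2 \<le> l2inner (S (S u)) u" "l2inner (S (S u)) u \<le> b * d\<^sup>2"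
  shows "sqrt a * d \<le> l2norm (S u) \<and> l2norm (S u) \<le> sqrt b * d"
proof
  have square: "(l2norm (S u))\<^sup>2 = l2inner (S (S u)) u"
    by (rule l2norm_square_positive_l2[OF S u])
  have "(sqrt a * d)\<^sup>2 = a * d\<^sup>2" "(sqrt b * d)\<^sup>2 = b * d\<^sup>2"
    using ab by (simp_all add: power_mult_distrib)
  then have lower: "(sqrt a * d)\<^sup>2 \<le> (l2norm (S u))\<^sup>2" and upper: "(l2norm (S u))\<^sup>2 \<le> (sqrt b * d)\<^sup>2"
    using bounds unfolding square by simp_all
  from lower show "sqrt a * d \<le> l2norm (S u)"
    by (rule power2_le_imp_le) (rule l2norm_nonneg)
  from upper show "l2norm (S u) \<le> sqrt b * d"
    by (rule power2_le_imp_le) (use ab d in simp)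
qed

lemma sum_atMost_eq_sum_atLeast1:
  fixes g :: "nat \<Rightarrow> 'a::comm_monoid_add"
  assumes "g 0 = 0"
  shows "(\<Sum>m\<le>N. g m) = (\<Sum>m\<in>{1..N}. g m)"
proof -
  have "sum g {..N} = g 0 + sum g {Suc 0..N}"
    by (simp add: atMost_atLeast0 sum.atLeast_Suc_atMost)
  then show ?thesis
    using assms by simp
qed

definition trunc_seq :: "nat \<Rightarrow> (nat \<Rightarrow> real) \<Rightarrow> nat \<Rightarrow> real" where
  "trunc_seq N u m = (if m \<le> N then u m else 0)"

lemma trunc_seq_l2: "u \<in> l2 \<Longrightarrow> trunc_seq N u \<in> l2"
  unfolding l2_iff_summable
  by (auto simp: trunc_seq_def intro: summable_comparison_test'[where g="\<lambda>n. (u n)\<^sup>2"])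

lemma sum_square_le_suminf: "u \<in> l2 \<Longrightarrow> finite S \<Longrightarrow> (\<Sum>m\<in>S. (u m)\<^sup>2) \<le> (\<Sum>m. (u m)\<^sup>2)"
  by (rule sum_le_suminf) (auto simp: l2_iff_summable)

definition trunc_ell :: "nat \<Rightarrow> ell \<Rightarrow> ell" where
  "trunc_ell N x = mkell (trunc_seq N (el x))"

lemma el_trunc_ell: "el (trunc_ell N x) = trunc_seq N (el x)"
  by (simp add: trunc_ell_def mkell_inverse trunc_seq_l2 el)

lemma trunc_ell_tendsto: "(\<lambda>N. trunc_ell N x) \<longlonglongrightarrow> x"
proof -
  let ?g = "\<lambda>m. (el x m)\<^sup>2"
  have g: "summable ?g"
    using el[of x] by (simp add: l2_iff_summable)
  have "(norm (x - trunc_ell N x))\<^sup>2 = (\<Sum>m. ?g m) - (\<Sum>m\<le>N. ?g m)" for N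
  proof -
    have "(\<lambda>m. (el (x - trunc_ell N x) m)\<^sup>2) = (\<lambda>m. if m \<in> {..N} then 0 else ?g m)"
      by (simp add: minus_ell.rep_eq el_trunc_ell trunc_seq_def fun_eq_iff)
    moreover have "(\<lambda>m. if m \<in> {..N} then 0 else ?g m) sums ((\<Sum>m. ?g m) + (\<Sum>m\<in>{..N}. 0 - ?g m))"
      by (rule sums_If_finite_set'[OF summable_sums[OF g]]) auto
    ultimately show ?thesis
      by (simp add: norm_ell_square sums_iff sum_negf)
  qed
  moreover have "(\<lambda>N. (\<Sum>m. ?g m) - (\<Sum>m\<le>N. ?g m)) \<longlonglongrightarrow> 0"
    using tendsto_diff[OF tendsto_const[of "\<Sum>m. ?g m"] summable_LIMSEQ'[OF g]] by simp
  ultimately have "(\<lambda>N. (norm (x - trunc_ell N x))\<^sup>2) \<longlonglongrightarrow> 0"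
    by simp
  then have "(\<lambda>N. sqrt ((norm (x - trunc_ell N x))\<^sup>2)) \<longlonglongrightarrow> sqrt 0"
    by (rule tendsto_real_sqrt)
  then have "(\<lambda>N. x - trunc_ell N x) \<longlonglongrightarrow> 0"
    by (simp add: tendsto_norm_zero_iff)
  then have "(\<lambda>N. x - (x - trunc_ell N x)) \<longlonglongrightarrow> x - 0"
    by (intro tendsto_diff tendsto_const)
  then show ?thesis
    by simp
qed

section \<open>Diagonal scaling\<close>

definition scaled_op :: "(nat \<Rightarrow> real) \<Rightarrow> ((nat \<Rightarrow> real) \<Rightarrow> nat \<Rightarrow> real) \<Rightarrow> (nat \<Rightarrow> real) \<Rightarrow> nat \<Rightarrow> real" where
  "scaled_op c A u = (\<lambda>n. c n * A (\<lambda>m. c m * u m) n)"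

lemma square_mult_le_bounded:
  assumes "\<forall>n\<ge>1. \<bar>c n\<bar> \<le> K" "u \<in> l2"
  shows "(c n * u n)\<^sup>2 \<le> K\<^sup>2 * (u n)\<^sup>2"
proof (cases "n = 0")
  case False
  then have "\<bar>c n\<bar>\<^sup>2 \<le> K\<^sup>2"
    using assms(1) by (intro power_mono) auto
  then show ?thesis
    by (simp add: power_mult_distrib mult_right_mono)
qed (use assms(2) in \<open>simp add: l2_iff_summable\<close>)

lemma l2_mult_bounded:
  assumes "\<forall>n\<ge>1. \<bar>c n\<bar> \<le> K" "u \<in> l2"
  shows "(\<lambda>n. c n * u n) \<in> l2"
  using assms square_mult_le_bounded[OF assms]
  by (auto simp: l2_iff_summable intro: summable_comparison_test'[where g="\<lambda>n. K\<^sup>2 * (u n)\<^sup>2"] summable_mult)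

lemma l2norm_mult_bounded_le:
  assumes "\<forall>n\<ge>1. \<bar>c n\<bar> \<le> K" "u \<in> l2"
  shows "l2norm (\<lambda>n. c n * u n) \<le> K * l2norm u"
proof -
  have K: "0 \<le> K"
    using assms(1) by (meson abs_ge_zero order_trans order_refl)
  have "(\<Sum>n. (c n * u n)\<^sup>2) \<le> (\<Sum>n. K\<^sup>2 * (u n)\<^sup>2)"
    using l2_mult_bounded[OF assms] assms(2) square_mult_le_bounded[OF assms]
    by (intro suminf_le summable_mult) (auto simp: l2_iff_summable)
  then have "l2norm (\<lambda>n. c n * u n) \<le> sqrt (K\<^sup>2 * (\<Sum>n. (u n)\<^sup>2))"
    using l2_mult_bounded[OF assms] assms(2)
    by (simp add: l2norm_eq_sqrt_suminf suminf_mult l2_iff_summable)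
  also have "\<dots> = K * l2norm u"
    using K assms(2) by (simp add: real_sqrt_mult l2norm_eq_sqrt_suminf)
  finally show ?thesis .
qed

lemma l2inner_mult_left: "l2inner (\<lambda>n. c n * u n) v = l2inner u (\<lambda>n. c n * v n)"
  unfolding l2inner_def by (simp add: mult_ac)

lemma l2inner_scaled_op: "l2inner (scaled_op c A u) v = l2inner (A (\<lambda>n. c n * u n)) (\<lambda>n. c n * v n)"
  by (simp add: scaled_op_def l2inner_mult_left)

lemma l2norm_scaled_op_le:
  assumes c: "\<forall>n\<ge>1. \<bar>c n\<bar> \<le> K" and A: "\<And>v. v \<in> l2 \<Longrightarrow> A v \<in> l2 \<and> l2norm (A v) \<le> b * l2norm v"
    and u: "u \<in> l2"
  shows "l2norm (scaled_op c A u) \<le> K * b * l2norm (\<lambda>n. c n * u n)"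
proof -
  have cu: "(\<lambda>n. c n * u n) \<in> l2"
    by (rule l2_mult_bounded[OF c u])
  have "l2norm (scaled_op c A u) \<le> K * l2norm (A (\<lambda>n. c n * u n))"
    unfolding scaled_op_def by (rule l2norm_mult_bounded_le[OF c]) (use A cu in blast)
  also have "\<dots> \<le> K * (b * l2norm (\<lambda>n. c n * u n))"
    using c A[OF cu] by (intro mult_left_mono) (auto intro: order_trans[OF abs_ge_zero])
  finally show ?thesis
    by (simp add: mult.assoc)
qed

lemma positive_l2_scaled_op:
  assumes c: "\<forall>n\<ge>1. \<bar>c n\<bar> \<le> K" and A: "positive_l2 A"
  shows "positive_l2 (scaled_op c A)"
proof -
  have A_l2: "\<And>u. u \<in> l2 \<Longrightarrow> A u \<in> l2"
    and A_lin: "\<And>u v a b. u \<in> l2 \<Longrightarrow> v \<in> l2 \<Longrightarrow> A (\<lambda>n. a * u n + b * v n) = (\<lambda>n. a * A u n + b * A v n)"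
    and A_sym: "\<And>u v. u \<in> l2 \<Longrightarrow> v \<in> l2 \<Longrightarrow> l2inner (A u) v = l2inner u (A v)"
    and A_nonneg: "\<And>u. u \<in> l2 \<Longrightarrow> 0 \<le> l2inner (A u) u"
    and "\<exists>B. \<forall>u\<in>l2. l2norm (A u) \<le> B * l2norm u"
    using A unfolding positive_l2_def bounded_linear_l2_def by blast+
  then obtain B where A_bound: "\<And>u. u \<in> l2 \<Longrightarrow> l2norm (A u) \<le> B * l2norm u"
    by blast
  have cu: "\<And>u. u \<in> l2 \<Longrightarrow> (\<lambda>n. c n * u n) \<in> l2"
    by (rule l2_mult_bounded[OF c])
  have "scaled_op c A u \<in> l2" if "u \<in> l2" for u
    unfolding scaled_op_def using that by (intro l2_mult_bounded[OF c] A_l2 cu)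
  moreover have "scaled_op c A (\<lambda>n. a * u n + b * v n) = (\<lambda>n. a * scaled_op c A u n + b * scaled_op c A v n)"
    if "u \<in> l2" "v \<in> l2" for u v a b
    using A_lin[OF cu cu, OF that, of a b] by (simp add: scaled_op_def algebra_simps)
  moreover have "l2norm (scaled_op c A u) \<le> (K * max B 0 * K) * l2norm u" if "u \<in> l2" for u
  proof -
    have K: "0 \<le> K"
      using c by (meson abs_ge_zero order_trans order_refl)
    have "l2norm (A v) \<le> max B 0 * l2norm v" if "v \<in> l2" for v
      using A_bound[OF that] mult_right_mono[OF max.cobounded1 l2norm_nonneg] by (rule order_trans)
    then have "l2norm (scaled_op c A u) \<le> K * max B 0 * l2norm (\<lambda>n. c n * u n)"
      using A_l2 that by (intro l2norm_scaled_op_le[OF c]) auto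
    also have "\<dots> \<le> K * max B 0 * (K * l2norm u)"
      using K by (intro mult_left_mono l2norm_mult_bounded_le[OF c that]) auto
    finally show ?thesis
      by (simp add: mult_ac)
  qed
  moreover have "l2inner (scaled_op c A u) v = l2inner u (scaled_op c A v)" if "u \<in> l2" "v \<in> l2" for u v
    using A_sym[OF cu cu, OF that] by (simp add: l2inner_scaled_op l2inner_mult_left scaled_op_def)
  moreover have "0 \<le> l2inner (scaled_op c A u) u" if "u \<in> l2" for u
    using A_nonneg[OF cu[OF that]] by (simp add: l2inner_scaled_op)
  ultimately show ?thesis
    unfolding positive_l2_def bounded_linear_l2_def by blast
qed

lemma scaled_op_form_bounds:
  assumes c: "\<forall>n\<ge>1. \<bar>c n\<bar> \<le> K"
    and A_form: "\<And>v. v \<in> l2 \<Longrightarrow> a * (l2norm v)\<^sup>2 \<le> l2inner (A v) v \<and> l2inner (A v) v \<le> b * (l2norm v)\<^sup>2"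
    and u: "u \<in> l2"
  shows "a * (l2norm (\<lambda>n. c n * u n))\<^sup>2 \<le> l2inner (scaled_op c A u) u \<and>
    l2inner (scaled_op c A u) u \<le> b * (l2norm (\<lambda>n. c n * u n))\<^sup>2"
  using A_form[OF l2_mult_bounded[OF c u]] by (simp add: l2inner_scaled_op)

lemma common_estimate_constant:
  fixes a b K :: real
  assumes "0 < a"
  shows "\<exists>C>0. K * b \<le> C \<and> 1 / C \<le> a \<and> 1 / C \<le> sqrt a \<and> sqrt b \<le> C"
proof -
  define C where "C = max (max 1 (K * b)) (max b (1 / a))"
  have C: "1 \<le> C" "K * b \<le> C" "b \<le> C" "1 / a \<le> C"
    by (auto simp: C_def)
  then have C_a: "1 / C \<le> a"
    using assms by (simp add: field_simps)
  have "(1 / C)\<^sup>2 \<le> 1 * (1 / C)"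
    unfolding power2_eq_square using C(1) by (intro mult_right_mono) auto
  with C_a have "1 / C \<le> sqrt a"
    by (intro real_le_rsqrt) linarith
  moreover have "b \<le> C * C"
    using C(1,3) mult_right_mono[of 1 C C] by linarith
  then have "sqrt b \<le> C"
    using C(1) by (intro real_le_lsqrt) (simp_all add: power2_eq_square)
  ultimately show ?thesis
    using C C_a by (intro exI[of _ C]) auto
qed

lemma scaled_op_estimates:
  assumes c: "\<forall>n\<ge>1. \<bar>c n\<bar> \<le> K" and A: "positive_l2 A"
    and A_form: "\<And>v. v \<in> l2 \<Longrightarrow> a * (l2norm v)\<^sup>2 \<le> l2inner (A v) v \<and> l2inner (A v) v \<le> b * (l2norm v)\<^sup>2"
    and A_norm: "\<And>v. v \<in> l2 \<Longrightarrow> l2norm (A v) \<le> b * l2norm v"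
    and ab: "0 < a" "0 < b" and T: "\<And>u. u \<in> l2 \<Longrightarrow> T u = scaled_op c A u"
  shows "\<exists>C>0.
    bounded_linear_l2 T \<and>
    (\<forall>u\<in>l2. l2norm (T u) \<le> C * l2norm (\<lambda>n. c n * u n)) \<and>
    (\<forall>u\<in>l2. \<forall>v\<in>l2. l2inner (T u) v = l2inner u (T v)) \<and>
    (\<forall>u\<in>l2. l2inner (T u) u \<ge> (1 / C) * (l2norm (\<lambda>n. c n * u n))\<^sup>2) \<and>
    (\<exists>S. positive_l2 S \<and> (\<forall>u\<in>l2. S (S u) = T u) \<and>
         (\<forall>S'. positive_l2 S' \<and> (\<forall>u\<in>l2. S' (S' u) = T u) \<longrightarrow> (\<forall>u\<in>l2. S' u = S u)) \<and>
         (\<forall>u\<in>l2. (1 / C) * l2norm (\<lambda>n. c n * u n) \<le> l2norm (S u) \<and>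
                  l2norm (S u) \<le> C * l2norm (\<lambda>n. c n * u n)))"
proof -
  obtain C where C_pos: "0 < C" and C: "K * b \<le> C" and C_a: "1 / C \<le> a"
    and C_sqrt_a: "1 / C \<le> sqrt a" and C_sqrt_b: "sqrt b \<le> C"
    using common_estimate_constant[OF ab(1)] by blast
  have T_pos: "positive_l2 T"
    using T positive_l2_scaled_op[OF c A] by (metis positive_l2_cong)
  have T_form: "a * (l2norm (\<lambda>n. c n * u n))\<^sup>2 \<le> l2inner (T u) u \<and> l2inner (T u) u \<le> b * (l2norm (\<lambda>n. c n * u n))\<^sup>2"
    if "u \<in> l2" for u
    using scaled_op_form_bounds[OF c A_form that] T[OF that] by simp
  obtain S where S: "positive_l2 S" "\<forall>u\<in>l2. S (S u) = T u"
    and S_unique: "\<forall>S'. positive_l2 S' \<and> (\<forall>u\<in>l2. S' (S' u) = T u) \<longrightarrow> (\<forall>u\<in>l2. S' u = S u)"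
    using positive_l2_sqrt[OF T_pos] by blast
  have "l2norm (T u) \<le> C * l2norm (\<lambda>n. c n * u n)"
    and "(1 / C) * (l2norm (\<lambda>n. c n * u n))\<^sup>2 \<le> l2inner (T u) u"
    and "(1 / C) * l2norm (\<lambda>n. c n * u n) \<le> l2norm (S u) \<and> l2norm (S u) \<le> C * l2norm (\<lambda>n. c n * u n)"
    if u: "u \<in> l2" for u
  proof -
    let ?d = "l2norm (\<lambda>n. c n * u n)"
    have "l2norm (T u) \<le> K * b * ?d"
      unfolding T[OF u] using A_norm A positive_l2_def bounded_linear_l2_def
      by (intro l2norm_scaled_op_le[OF c _ u]) blast
    also have "\<dots> \<le> C * ?d"
      by (intro mult_right_mono C l2norm_nonneg)
    finally show "l2norm (T u) \<le> C * ?d" .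
    show "(1 / C) * ?d\<^sup>2 \<le> l2inner (T u) u"
      using T_form[OF u] mult_right_mono[OF C_a zero_le_power2[of ?d]] by linarith
    have "sqrt a * ?d \<le> l2norm (S u) \<and> l2norm (S u) \<le> sqrt b * ?d"
      using T_form[OF u] ab by (intro l2norm_sqrt_bounds[OF S(1) u]) (auto simp: l2norm_nonneg S(2) u)
    then show "(1 / C) * ?d \<le> l2norm (S u) \<and> l2norm (S u) \<le> C * ?d"
      using mult_right_mono[OF C_sqrt_a l2norm_nonneg[of "\<lambda>n. c n * u n"]]
        mult_right_mono[OF C_sqrt_b l2norm_nonneg[of "\<lambda>n. c n * u n"]] by linarith
  qed
  with C_pos T_pos S S_unique show ?thesis
    unfolding positive_l2_def by blast
qed

section \<open>The Gram matrix of a density in an orthonormal family\<close>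

lemma set_integral_eq_integral_continuous:
  fixes \<phi> :: "real \<Rightarrow> real"
  assumes "continuous_on {a..b} \<phi>"
  shows "(LINT r:{a..b}|lborel. \<phi> r) = integral {a..b} \<phi>"
  by (rule set_borel_integral_eq_integral(2)[OF borel_integrable_atLeastAtMost'[OF assms]])

locale weighted_orthonormal_family =
  fixes H :: real and rho w :: "real \<Rightarrow> real" and f :: "nat \<Rightarrow> real \<Rightarrow> real" and q0 q1 :: real
  assumes continuous_f: "\<And>n. n \<ge> 1 \<Longrightarrow> continuous_on {-H..0} (f n)"
    and continuous_rho: "continuous_on {-H..0} rho"
    and continuous_w: "continuous_on {-H..0} w"
    and w_pos: "\<And>r. r \<in> {-H..0} \<Longrightarrow> w r > 0"
    and q0_pos: "q0 > 0" and q1_pos: "q1 > 0"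
    and rho_between: "\<And>r. r \<in> {-H..0} \<Longrightarrow> q0 * w r \<le> rho r \<and> rho r \<le> q1 * w r"
    and orthonormal: "\<And>n m. n \<ge> 1 \<Longrightarrow> m \<ge> 1 \<Longrightarrow>
      integral {-H..0} (\<lambda>r. f n r * f m r * w r) = (if n = m then 1 else 0)"
begin

definition inner_w :: "(real \<Rightarrow> real) \<Rightarrow> (real \<Rightarrow> real) \<Rightarrow> real" where
  "inner_w h k = integral {-H..0} (\<lambda>r. h r * k r * w r)"

definition inner_rho :: "(real \<Rightarrow> real) \<Rightarrow> (real \<Rightarrow> real) \<Rightarrow> real" where
  "inner_rho h k = integral {-H..0} (\<lambda>r. h r * k r * rho r)"

definition expansion :: "(nat \<Rightarrow> real) \<Rightarrow> nat set \<Rightarrow> real \<Rightarrow> real" where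
  "expansion y S r = (\<Sum>m\<in>S. y m * f m r)"

definition ratio_mult :: "(real \<Rightarrow> real) \<Rightarrow> real \<Rightarrow> real" where
  "ratio_mult h r = h r * rho r / w r"

definition gram :: "nat \<Rightarrow> nat \<Rightarrow> real" where
  "gram n m = inner_rho (f n) (f m)"

text \<open>The sum includes the index \<open>0\<close>, where \<open>f 0\<close> is arbitrary; it contributes nothing on
  \<open>l2\<close>, whose elements vanish at \<open>0\<close>.\<close>

definition gram_op :: "(nat \<Rightarrow> real) \<Rightarrow> nat \<Rightarrow> real" where
  "gram_op u n = (if n = 0 then 0 else (\<Sum>m. gram n m * u m))"

lemma continuous_on_expansion: "S \<subseteq> {1..} \<Longrightarrow> continuous_on {-H..0} (expansion y S)"
  unfolding expansion_def by (intro continuous_intros) (auto intro!: continuous_f)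

lemma continuous_on_ratio_mult: "continuous_on {-H..0} h \<Longrightarrow> continuous_on {-H..0} (ratio_mult h)"
  unfolding ratio_mult_def
  by (intro continuous_intros continuous_rho continuous_w) (use w_pos in \<open>auto simp: less_imp_neq[symmetric]\<close>)

lemma inner_w_commute: "inner_w h k = inner_w k h"
  unfolding inner_w_def by (simp add: mult_ac)

lemma inner_rho_commute: "inner_rho h k = inner_rho k h"
  unfolding inner_rho_def by (simp add: mult_ac)

lemma inner_rho_eq_inner_w: "inner_rho h k = inner_w h (ratio_mult k)"
  unfolding inner_rho_def inner_w_def ratio_mult_def
  by (rule integral_cong) (use w_pos in \<open>auto simp: less_imp_neq[symmetric]\<close>)

lemma inner_w_expansion_left:
  assumes S: "finite S" "S \<subseteq> {1..}" and k: "continuous_on {-H..0} k"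
  shows "inner_w (expansion y S) k = (\<Sum>m\<in>S. y m * inner_w (f m) k)"
proof -
  have "inner_w (expansion y S) k = integral {-H..0} (\<lambda>r. \<Sum>m\<in>S. y m * (f m r * k r * w r))"
    unfolding inner_w_def expansion_def
    by (rule integral_cong) (simp add: sum_distrib_right sum_distrib_left mult_ac)
  also have "\<dots> = (\<Sum>m\<in>S. integral {-H..0} (\<lambda>r. y m * (f m r * k r * w r)))"
    using S by (intro integral_sum integrable_continuous_interval continuous_intros continuous_f k
        continuous_w) auto
  also have "\<dots> = (\<Sum>m\<in>S. y m * inner_w (f m) k)"
    by (simp add: inner_w_def)
  finally show ?thesis .
qed

lemma inner_w_expansion_right:
  "finite S \<Longrightarrow> S \<subseteq> {1..} \<Longrightarrow> continuous_on {-H..0} k \<Longrightarrow>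
    inner_w k (expansion y S) = (\<Sum>m\<in>S. y m * inner_w k (f m))"
  using inner_w_expansion_left by (simp add: inner_w_commute)

lemma inner_w_expansion_basis:
  assumes S: "finite S" "S \<subseteq> {1..}" and m: "m \<in> S"
  shows "inner_w (expansion y S) (f m) = y m"
proof -
  have "inner_w (expansion y S) (f m) = (\<Sum>n\<in>S. y n * inner_w (f n) (f m))"
    using S m by (intro inner_w_expansion_left continuous_f) auto
  also have "\<dots> = (\<Sum>n\<in>S. if n = m then y n else 0)"
  proof (rule sum.cong[OF refl])
    fix n assume "n \<in> S"
    then have "n \<ge> 1" "m \<ge> 1"
      using S m by auto
    then show "y n * inner_w (f n) (f m) = (if n = m then y n else 0)"
      by (simp add: inner_w_def orthonormal)
  qed
  finally show ?thesis
    using S m by simp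
qed

lemma inner_w_expansion_expansion:
  assumes "finite S" "S \<subseteq> {1..}"
  shows "inner_w (expansion x S) (expansion y S) = (\<Sum>m\<in>S. x m * y m)"
  using assms by (simp add: inner_w_expansion_right continuous_on_expansion inner_w_expansion_basis mult.commute)

lemma inner_w_self_nonneg:
  assumes "continuous_on {-H..0} h"
  shows "0 \<le> inner_w h h"
  unfolding inner_w_def
proof (rule integral_nonneg)
  show "(\<lambda>r. h r * h r * w r) integrable_on {-H..0}"
    by (intro integrable_continuous_interval continuous_intros assms continuous_w)
  show "0 \<le> h r * h r * w r" if "r \<in> {-H..0}" for r
    using w_pos[OF that] by simp
qed

lemma inner_w_diff_self:
  assumes h: "continuous_on {-H..0} h" and k: "continuous_on {-H..0} k"
  shows "inner_w (\<lambda>r. h r - k r) (\<lambda>r. h r - k r) = inner_w h h - 2 * inner_w h k + inner_w k k"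
proof -
  have int: "(\<lambda>r. c * (a r * b r * w r)) integrable_on {-H..0}"
    if "continuous_on {-H..0} a" "continuous_on {-H..0} b" for a b c
    by (intro integrable_continuous_interval continuous_intros that continuous_w)
  have "inner_w (\<lambda>r. h r - k r) (\<lambda>r. h r - k r)
      = integral {-H..0} (\<lambda>r. 1 * (h r * h r * w r) - 2 * (h r * k r * w r) + 1 * (k r * k r * w r))"
    unfolding inner_w_def by (rule integral_cong) (simp add: algebra_simps)
  also have "\<dots> = integral {-H..0} (\<lambda>r. 1 * (h r * h r * w r) - 2 * (h r * k r * w r))
      + integral {-H..0} (\<lambda>r. 1 * (k r * k r * w r))"
    by (intro integral_add integrable_diff int h k)
  also have "\<dots> = integral {-H..0} (\<lambda>r. 1 * (h r * h r * w r)) - integral {-H..0} (\<lambda>r. 2 * (h r * k r * w r))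
      + integral {-H..0} (\<lambda>r. 1 * (k r * k r * w r))"
    using int[OF h h, of 1] int[OF h k, of 2] by (simp only: integral_diff)
  finally show ?thesis
    by (simp add: inner_w_def)
qed

lemma Bessel_inequality:
  assumes h: "continuous_on {-H..0} h"
  shows "(\<Sum>n\<in>{1..K}. (inner_w h (f n))\<^sup>2) \<le> inner_w h h"
proof -
  define a where "a n = inner_w h (f n)" for n
  let ?S = "{1..K::nat}" and ?F = "expansion a {1..K}"
  have F: "continuous_on {-H..0} ?F"
    by (rule continuous_on_expansion) auto
  have "0 \<le> inner_w (\<lambda>r. h r - ?F r) (\<lambda>r. h r - ?F r)"
    by (intro inner_w_self_nonneg continuous_intros h F)
  also have "\<dots> = inner_w h h - 2 * inner_w h ?F + inner_w ?F ?F"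
    by (rule inner_w_diff_self[OF h F])
  also have "inner_w h ?F = (\<Sum>n\<in>?S. (a n)\<^sup>2)"
    using h by (simp add: inner_w_expansion_right a_def power2_eq_square)
  also have "inner_w ?F ?F = (\<Sum>n\<in>?S. (a n)\<^sup>2)"
    by (simp add: inner_w_expansion_expansion power2_eq_square)
  finally show ?thesis
    by (simp add: a_def)
qed

lemma inner_rho_ge:
  assumes h: "continuous_on {-H..0} h"
  shows "q0 * inner_w h h \<le> inner_rho h h"
proof -
  have "q0 * inner_w h h = integral {-H..0} (\<lambda>r. q0 * (h r * h r * w r))"
    by (simp add: inner_w_def)
  also have "\<dots> \<le> inner_rho h h"
    unfolding inner_rho_def
  proof (rule integral_le)
    show "(\<lambda>r. q0 * (h r * h r * w r)) integrable_on {-H..0}" "(\<lambda>r. h r * h r * rho r) integrable_on {-H..0}"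
      by (intro integrable_continuous_interval continuous_intros h continuous_w continuous_rho)+
    show "q0 * (h r * h r * w r) \<le> h r * h r * rho r" if "r \<in> {-H..0}" for r
      using mult_left_mono[of "q0 * w r" "rho r" "h r * h r"] rho_between[OF that]
      by (simp add: mult_ac)
  qed
  finally show ?thesis .
qed

lemma inner_w_ratio_mult_le:
  assumes h: "continuous_on {-H..0} h"
  shows "inner_w (ratio_mult h) (ratio_mult h) \<le> q1\<^sup>2 * inner_w h h"
proof -
  have "inner_w (ratio_mult h) (ratio_mult h) \<le> integral {-H..0} (\<lambda>r. q1\<^sup>2 * (h r * h r * w r))"
    unfolding inner_w_def
  proof (rule integral_le)
    show "(\<lambda>r. ratio_mult h r * ratio_mult h r * w r) integrable_on {-H..0}"
      "(\<lambda>r. q1\<^sup>2 * (h r * h r * w r)) integrable_on {-H..0}"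
      by (intro integrable_continuous_interval continuous_intros continuous_on_ratio_mult h continuous_w)+
    fix r assume r: "r \<in> {-H..0}"
    have w: "w r > 0"
      by (rule w_pos[OF r])
    have "0 \<le> rho r" "rho r \<le> q1 * w r"
      using rho_between[OF r] q0_pos w by (auto intro: order_trans[rotated])
    then have "rho r * rho r \<le> (q1 * w r) * (q1 * w r)"
      by (intro mult_mono) auto
    then have "(h r * h r / w r) * (rho r * rho r) \<le> (h r * h r / w r) * ((q1 * w r) * (q1 * w r))"
      using w by (intro mult_left_mono) auto
    then show "ratio_mult h r * ratio_mult h r * w r \<le> q1\<^sup>2 * (h r * h r * w r)"
      using w by (simp add: ratio_mult_def power2_eq_square field_simps)
  qed
  also have "\<dots> = q1\<^sup>2 * inner_w h h"
    by (simp add: inner_w_def)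
  finally show ?thesis .
qed

lemma gram_eq_inner_w_ratio_mult: "gram n m = inner_w (ratio_mult (f n)) (f m)"
proof -
  have "gram n m = inner_rho (f m) (f n)"
    by (simp add: gram_def inner_rho_commute)
  then show ?thesis
    by (simp add: inner_rho_eq_inner_w inner_w_commute)
qed

lemma gram_row_l2:
  assumes n: "n \<ge> 1"
  shows "(\<lambda>m. if m = 0 then 0 else gram n m) \<in> l2"
proof -
  let ?row = "\<lambda>m. if m = 0 then 0 else gram n m"
  let ?B = "inner_w (ratio_mult (f n)) (ratio_mult (f n))"
  have fn: "continuous_on {-H..0} (ratio_mult (f n))"
    by (intro continuous_on_ratio_mult continuous_f n)
  have "(\<Sum>m<K. (?row m)\<^sup>2) \<le> ?B" for K
  proof (cases K)
    case (Suc N)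
    then have "(\<Sum>m<K. (?row m)\<^sup>2) = (\<Sum>m\<in>{1..N}. (inner_w (ratio_mult (f n)) (f m))\<^sup>2)"
      by (simp add: lessThan_Suc_atMost sum_atMost_eq_sum_atLeast1 gram_eq_inner_w_ratio_mult)
    also have "\<dots> \<le> ?B"
      by (rule Bessel_inequality[OF fn])
    finally show ?thesis .
  qed (simp add: inner_w_self_nonneg[OF fn])
  then have "summable (\<lambda>m. (?row m)\<^sup>2)"
    by (intro summableI_nonneg_bounded) auto
  then show ?thesis
    by (simp add: l2_iff_summable)
qed

lemma summable_abs_gram_row:
  assumes "u \<in> l2" "n \<ge> 1"
  shows "summable (\<lambda>m. \<bar>gram n m * u m\<bar>)"
proof -
  have "(\<lambda>m. \<bar>(if m = 0 then 0 else gram n m) * u m\<bar>) = (\<lambda>m. \<bar>gram n m * u m\<bar>)"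
    using assms(1) by (auto simp: l2_iff_summable)
  with summable_abs_mult_l2[OF gram_row_l2[OF assms(2)] assms(1)] show ?thesis
    by simp
qed

lemma summable_gram_row: "u \<in> l2 \<Longrightarrow> n \<ge> 1 \<Longrightarrow> summable (\<lambda>m. gram n m * u m)"
  by (rule summable_rabs_cancel[OF summable_abs_gram_row])

lemma gram_op_trunc_seq_eq_sum:
  assumes "n \<ge> 1"
  shows "gram_op (trunc_seq N u) n = (\<Sum>m\<le>N. gram n m * u m)"
proof -
  have "gram_op (trunc_seq N u) n = (\<Sum>m. gram n m * trunc_seq N u m)"
    using assms by (simp add: gram_op_def)
  also have "\<dots> = (\<Sum>m\<le>N. gram n m * trunc_seq N u m)"
    by (rule suminf_finite) (auto simp: trunc_seq_def)
  also have "\<dots> = (\<Sum>m\<le>N. gram n m * u m)"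
    by (rule sum.cong) (auto simp: trunc_seq_def)
  finally show ?thesis .
qed

lemma gram_op_trunc_seq:
  assumes u: "u \<in> l2" and n: "n \<ge> 1"
  shows "gram_op (trunc_seq N u) n = inner_rho (f n) (expansion u {1..N})"
proof -
  have "gram_op (trunc_seq N u) n = (\<Sum>m\<in>{1..N}. gram n m * u m)"
    using u n by (simp add: gram_op_trunc_seq_eq_sum sum_atMost_eq_sum_atLeast1 l2_iff_summable)
  also have "\<dots> = (\<Sum>m\<in>{1..N}. u m * inner_w (f m) (ratio_mult (f n)))"
    by (simp add: gram_eq_inner_w_ratio_mult inner_w_commute mult.commute)
  also have "\<dots> = inner_w (expansion u {1..N}) (ratio_mult (f n))"
    by (rule inner_w_expansion_left[symmetric]) (auto intro: continuous_on_ratio_mult continuous_f n)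
  also have "\<dots> = inner_rho (f n) (expansion u {1..N})"
    by (metis inner_rho_commute inner_rho_eq_inner_w)
  finally show ?thesis .
qed

lemma gram_op_trunc_seq_tendsto:
  assumes "u \<in> l2"
  shows "(\<lambda>N. gram_op (trunc_seq N u) n) \<longlonglongrightarrow> gram_op u n"
proof (cases "n = 0")
  case False
  then have "(\<lambda>N. gram_op (trunc_seq N u) n) = (\<lambda>N. \<Sum>m\<le>N. gram n m * u m)"
    by (simp add: gram_op_trunc_seq_eq_sum)
  with summable_LIMSEQ'[OF summable_gram_row[OF assms]] False show ?thesis
    by (simp add: gram_op_def)
qed (simp add: gram_op_def)

lemma sum_square_gram_op_trunc_seq_le:
  assumes u: "u \<in> l2"
  shows "(\<Sum>n\<in>{1..K}. (gram_op (trunc_seq N u) n)\<^sup>2) \<le> q1\<^sup>2 * (\<Sum>m\<in>{1..N}. (u m)\<^sup>2)"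
proof -
  let ?G = "expansion u {1..N}"
  have G: "continuous_on {-H..0} ?G"
    by (rule continuous_on_expansion) auto
  have "(\<Sum>n\<in>{1..K}. (gram_op (trunc_seq N u) n)\<^sup>2) = (\<Sum>n\<in>{1..K}. (inner_w (ratio_mult ?G) (f n))\<^sup>2)"
    using u by (intro sum.cong) (auto simp: gram_op_trunc_seq inner_rho_commute[of "f _"] inner_rho_eq_inner_w
        inner_w_commute)
  also have "\<dots> \<le> inner_w (ratio_mult ?G) (ratio_mult ?G)"
    by (intro Bessel_inequality continuous_on_ratio_mult G)
  also have "\<dots> \<le> q1\<^sup>2 * inner_w ?G ?G"
    by (rule inner_w_ratio_mult_le[OF G])
  also have "inner_w ?G ?G = (\<Sum>m\<in>{1..N}. (u m)\<^sup>2)"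
    by (simp add: inner_w_expansion_expansion power2_eq_square)
  finally show ?thesis .
qed

lemma gram_op_l2:
  assumes u: "u \<in> l2"
  shows "gram_op u \<in> l2" and "(\<Sum>n. (gram_op u n)\<^sup>2) \<le> q1\<^sup>2 * (\<Sum>m. (u m)\<^sup>2)"
proof -
  have partial: "(\<Sum>n<K. (gram_op u n)\<^sup>2) \<le> q1\<^sup>2 * (\<Sum>m. (u m)\<^sup>2)" for K
  proof -
    have "(\<Sum>n\<in>{1..K}. (gram_op (trunc_seq N u) n)\<^sup>2) \<le> q1\<^sup>2 * (\<Sum>m. (u m)\<^sup>2)" for N
    proof -
      have "(\<Sum>n\<in>{1..K}. (gram_op (trunc_seq N u) n)\<^sup>2) \<le> q1\<^sup>2 * (\<Sum>m\<in>{1..N}. (u m)\<^sup>2)"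
        by (rule sum_square_gram_op_trunc_seq_le[OF u])
      also have "\<dots> \<le> q1\<^sup>2 * (\<Sum>m. (u m)\<^sup>2)"
        by (intro mult_left_mono sum_square_le_suminf u) auto
      finally show ?thesis .
    qed
    then have "(\<Sum>n\<in>{1..K}. (gram_op u n)\<^sup>2) \<le> q1\<^sup>2 * (\<Sum>m. (u m)\<^sup>2)"
      by (intro tendsto_le[OF _ tendsto_const tendsto_sum[OF tendsto_power[OF gram_op_trunc_seq_tendsto[OF u]]]])
        auto
    moreover have "(\<Sum>n<K. (gram_op u n)\<^sup>2) \<le> (\<Sum>n\<le>K. (gram_op u n)\<^sup>2)"
      by (intro sum_mono2) auto
    ultimately show ?thesis
      by (simp add: sum_atMost_eq_sum_atLeast1 gram_op_def)
  qed
  then have "summable (\<lambda>n. (gram_op u n)\<^sup>2)"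
    by (intro summableI_nonneg_bounded) auto
  then show "gram_op u \<in> l2"
    by (simp add: l2_iff_summable gram_op_def)
  show "(\<Sum>n. (gram_op u n)\<^sup>2) \<le> q1\<^sup>2 * (\<Sum>m. (u m)\<^sup>2)"
    by (rule suminf_le_const[OF \<open>summable _\<close> partial])
qed

lemma l2norm_gram_op_le: "u \<in> l2 \<Longrightarrow> l2norm (gram_op u) \<le> q1 * l2norm u"
  using gram_op_l2[of u] q1_pos real_sqrt_le_mono
  by (fastforce simp: l2norm_eq_sqrt_suminf real_sqrt_mult)

lemma gram_op_lincomb:
  assumes u: "u \<in> l2" and v: "v \<in> l2"
  shows "gram_op (\<lambda>m. a * u m + b * v m) = (\<lambda>n. a * gram_op u n + b * gram_op v n)"
proof
  fix n
  show "gram_op (\<lambda>m. a * u m + b * v m) n = a * gram_op u n + b * gram_op v n"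
  proof (cases "n = 0")
    case False
    then have "(\<Sum>m. gram n m * (a * u m + b * v m)) = a * (\<Sum>m. gram n m * u m) + b * (\<Sum>m. gram n m * v m)"
      using summable_gram_row[OF u] summable_gram_row[OF v]
      by (simp add: algebra_simps suminf_add[symmetric] summable_mult suminf_mult)
    with False show ?thesis
      by (simp add: gram_op_def)
  qed (simp add: gram_op_def)
qed

lemma bounded_linear_l2_gram_op: "bounded_linear_l2 gram_op"
  unfolding bounded_linear_l2_def using gram_op_l2(1) gram_op_lincomb l2norm_gram_op_le by blast

definition gram_ell :: "ell \<Rightarrow>\<^sub>L ell" where
  "gram_ell = blinfun_of_l2 gram_op"

lemma el_gram_ell: "el (gram_ell x) = gram_op (el x)"
  by (simp add: gram_ell_def el_blinfun_of_l2 bounded_linear_l2_gram_op)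

text \<open>On finitely supported sequences the quadratic form of \<open>gram_ell\<close> is \<open>inner_rho\<close> of the
  corresponding expansions; everything else follows by density and continuity.\<close>

lemma inner_gram_ell_trunc_ell:
  "inner (gram_ell (trunc_ell N x)) (trunc_ell N y) = inner_rho (expansion (el y) {1..N}) (expansion (el x) {1..N})"
proof -
  have "inner (gram_ell (trunc_ell N x)) (trunc_ell N y) = (\<Sum>n. gram_op (trunc_seq N (el x)) n * trunc_seq N (el y) n)"
    by (simp add: inner_ell.rep_eq el_gram_ell el_trunc_ell)
  also have "\<dots> = (\<Sum>n\<le>N. gram_op (trunc_seq N (el x)) n * trunc_seq N (el y) n)"
    by (rule suminf_finite) (auto simp: trunc_seq_def)
  also have "\<dots> = (\<Sum>n\<in>{1..N}. gram_op (trunc_seq N (el x)) n * trunc_seq N (el y) n)"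
    by (rule sum_atMost_eq_sum_atLeast1) (simp add: gram_op_def)
  also have "\<dots> = (\<Sum>n\<in>{1..N}. el y n * inner_rho (f n) (expansion (el x) {1..N}))"
    by (rule sum.cong[OF refl]) (auto simp: trunc_seq_def gram_op_trunc_seq el)
  also have "\<dots> = inner_rho (expansion (el y) {1..N}) (expansion (el x) {1..N})"
    by (simp add: inner_rho_eq_inner_w inner_w_expansion_left continuous_on_ratio_mult continuous_on_expansion)
  finally show ?thesis .
qed

lemma norm_trunc_ell_square:
  "(norm (trunc_ell N x))\<^sup>2 = inner_w (expansion (el x) {1..N}) (expansion (el x) {1..N})"
proof -
  have "(norm (trunc_ell N x))\<^sup>2 = (\<Sum>m. (trunc_seq N (el x) m)\<^sup>2)"
    by (simp add: norm_ell_square el_trunc_ell)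
  also have "\<dots> = (\<Sum>m\<le>N. (trunc_seq N (el x) m)\<^sup>2)"
    by (rule suminf_finite) (auto simp: trunc_seq_def)
  also have "\<dots> = (\<Sum>m\<in>{1..N}. el x m * el x m)"
    using el[of x] by (simp add: sum_atMost_eq_sum_atLeast1 trunc_seq_def l2_iff_summable power2_eq_square)
  also have "\<dots> = inner_w (expansion (el x) {1..N}) (expansion (el x) {1..N})"
    by (simp add: inner_w_expansion_expansion)
  finally show ?thesis .
qed

lemma inner_gram_ell_trunc_ell_tendsto:
  "(\<lambda>N. inner (gram_ell (trunc_ell N x)) (trunc_ell N y)) \<longlonglongrightarrow> inner (gram_ell x) y"
  by (intro tendsto_inner blinfun.tendsto[OF tendsto_const] trunc_ell_tendsto)

lemma selfadjoint_gram_ell: "selfadjoint gram_ell"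
  unfolding selfadjoint_def
proof (intro allI)
  fix x y
  have "inner (gram_ell x) y = inner (gram_ell y) x"
    using inner_gram_ell_trunc_ell_tendsto[of x y] inner_gram_ell_trunc_ell_tendsto[of y x]
    by (simp add: inner_gram_ell_trunc_ell inner_rho_commute LIMSEQ_unique)
  then show "inner (gram_ell x) y = inner x (gram_ell y)"
    by (simp add: inner_commute)
qed

lemma gram_ell_coercive: "q0 * (norm x)\<^sup>2 \<le> inner (gram_ell x) x"
proof (rule tendsto_le[OF _ inner_gram_ell_trunc_ell_tendsto])
  show "(\<lambda>N. q0 * (norm (trunc_ell N x))\<^sup>2) \<longlonglongrightarrow> q0 * (norm x)\<^sup>2"
    by (intro tendsto_intros trunc_ell_tendsto)
  show "\<forall>\<^sub>F N in sequentially. q0 * (norm (trunc_ell N x))\<^sup>2 \<le> inner (gram_ell (trunc_ell N x)) (trunc_ell N x)"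
    by (simp add: norm_trunc_ell_square inner_gram_ell_trunc_ell inner_rho_ge continuous_on_expansion)
qed simp

lemma positive_l2_gram_op: "positive_l2 gram_op"
proof -
  have "0 \<le> inner (gram_ell x) x" for x
    using gram_ell_coercive[of x] q0_pos by (smt (verit) mult_nonneg_nonneg zero_le_power2)
  then have "positive_op gram_ell"
    using selfadjoint_gram_ell by (simp add: positive_op_def)
  then have "positive_l2 (l2_op gram_ell)"
    by (rule positive_l2_l2_op)
  moreover have "l2_op gram_ell u = gram_op u" if "u \<in> l2" for u
    using that by (simp add: l2_op_def el_gram_ell mkell_inverse)
  ultimately show ?thesis
    using positive_l2_cong by blast
qed

lemma gram_op_form_bounds:
  assumes u: "u \<in> l2"
  shows "q0 * (l2norm u)\<^sup>2 \<le> l2inner (gram_op u) u \<and> l2inner (gram_op u) u \<le> q1 * (l2norm u)\<^sup>2"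
proof
  show "q0 * (l2norm u)\<^sup>2 \<le> l2inner (gram_op u) u"
    using gram_ell_coercive[of "mkell u"] u
    by (simp add: norm_mkell inner_ell_eq_l2inner el_gram_ell mkell_inverse)
  have "l2inner (gram_op u) u = inner (gram_ell (mkell u)) (mkell u)"
    using u by (simp add: inner_ell_eq_l2inner el_gram_ell mkell_inverse)
  also have "\<dots> \<le> norm (gram_ell (mkell u)) * norm (mkell u)"
    by (rule norm_cauchy_schwarz)
  also have "\<dots> = l2norm (gram_op u) * l2norm u"
    using u by (simp add: norm_ell_eq_l2norm el_gram_ell mkell_inverse)
  also have "\<dots> \<le> q1 * l2norm u * l2norm u"
    by (intro mult_right_mono l2norm_gram_op_le u l2norm_nonneg)
  also have "\<dots> = q1 * (l2norm u)\<^sup>2"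
    by (simp add: power2_eq_square)
  finally show "l2inner (gram_op u) u \<le> q1 * (l2norm u)\<^sup>2" .
qed

lemma Mmat_eq_gram: "n \<ge> 1 \<Longrightarrow> m \<ge> 1 \<Longrightarrow> Mmat H rho c f n m = c n * c m * gram n m"
  unfolding Mmat_def gram_def inner_rho_def
  by (subst set_integral_eq_integral_continuous) (intro continuous_intros continuous_f continuous_rho, auto)

lemma has_sum_Mmat_row:
  assumes c: "\<forall>n\<ge>1. \<bar>c n\<bar> \<le> K" and u: "u \<in> l2" and n: "n \<ge> 1"
  shows "((\<lambda>m. Mmat H rho c f n m * u m) has_sum scaled_op c gram_op u n) {1..}"
proof -
  have cu: "(\<lambda>m. c m * u m) \<in> l2"
    by (rule l2_mult_bounded[OF c u])
  have "((\<lambda>m. gram n m * (c m * u m)) has_sum (\<Sum>m. gram n m * (c m * u m))) {1..}"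
    using u by (intro has_sum_atLeast1_suminf summable_abs_gram_row[OF cu n]) (simp add: l2_iff_summable)
  then have "((\<lambda>m. gram n m * (c m * u m)) has_sum gram_op (\<lambda>m. c m * u m) n) {1..}"
    using n by (simp add: gram_op_def)
  then have "((\<lambda>m. c n * (gram n m * (c m * u m))) has_sum scaled_op c gram_op u n) {1..}"
    unfolding scaled_op_def by (rule has_sum_cmult_right)
  moreover have "c n * (gram n m * (c m * u m)) = Mmat H rho c f n m * u m" if "m \<in> {1..}" for m
  proof -
    have "Mmat H rho c f n m = c n * c m * gram n m"
      using that n by (intro Mmat_eq_gram) auto
    then show ?thesis
      by (simp add: mult_ac)
  qed
  ultimately show ?thesis
    using has_sum_cong[where f="\<lambda>m. c n * (gram n m * (c m * u m))" and g="\<lambda>m. Mmat H rho c f n m * u m"]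
    by blast
qed

lemma Mop_Mmat:
  assumes "\<forall>n\<ge>1. \<bar>c n\<bar> \<le> K" and "u \<in> l2"
  shows "Mop (Mmat H rho c f) u = scaled_op c gram_op u"
proof
  fix n
  show "Mop (Mmat H rho c f) u n = scaled_op c gram_op u n"
    using has_sum_Mmat_row[OF assms, of n] by (cases "n = 0") (auto simp: Mop_def scaled_op_def gram_op_def infsumI)
qed

lemma Mmat_eq_if_proportional:
  assumes H: "0 \<le> H" and proportional: "\<forall>r\<in>{-H..0}. w r = rho r * K" and n: "n \<ge> 1" and m: "m \<ge> 1"
  shows "Mmat H rho c f n m = (if n = m then (c n)\<^sup>2 / K else 0)"
proof -
  have "K \<noteq> 0"
    using w_pos[of 0] proportional H by auto
  have "integral {-H..0} (\<lambda>r. f n r * f m r * w r) = integral {-H..0} (\<lambda>r. K * (f n r * f m r * rho r))"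
    using proportional by (intro integral_cong) (simp add: mult_ac)
  also have "\<dots> = K * gram n m"
    by (simp add: gram_def inner_rho_def)
  finally have "integral {-H..0} (\<lambda>r. f n r * f m r * w r) = K * gram n m" .
  with orthonormal[OF n m] \<open>K \<noteq> 0\<close> have "gram n m = (if n = m then 1 / K else 0)"
    by (auto simp: field_simps split: if_splits)
  then show ?thesis
    using Mmat_eq_gram[OF n m, of c] by (simp add: power2_eq_square)
qed

end

section \<open>The stratified setting\<close>

lemma smooth_on_imp_continuous_on:
  assumes "smooth_on S f"
  shows "continuous_on S f" "continuous_on S (deriv f)"
proof -
  obtain U where U: "S \<subseteq> U" "\<forall>k. \<forall>x\<in>U. ((deriv ^^ k) f) differentiable (at x)"
    using assms unfolding smooth_on_def by blast
  have "((deriv ^^ k) f) differentiable (at x)" if "x \<in> S" for k x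
    using U that by blast
  from this[of _ 0] this[of _ 1]
  have "f differentiable (at x)" "deriv f differentiable (at x)" if "x \<in> S" for x
    using that by simp_all
  then show "continuous_on S f" "continuous_on S (deriv f)"
    by (auto intro!: continuous_at_imp_continuous_on differentiable_imp_continuous_within)
qed

lemma Nsq_weight_bounds:
  assumes g: "g > 0" and rho: "\<forall>r\<in>{-H..0}. rho r \<noteq> 0" and drho: "\<forall>r\<in>{-H..0}. - deriv rho r \<ge> c_low"
    and continuous: "continuous_on {-H..0} (deriv rho)"
  shows "\<exists>D>0. \<forall>r\<in>{-H..0}. g * c_low \<le> rho r * Nsq g rho r \<and> rho r * Nsq g rho r \<le> g * D"
proof -
  obtain D where D: "D > 0" "\<forall>r\<in>{-H..0}. norm (deriv rho r) \<le> D"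
    using compact_imp_bounded[OF compact_continuous_image[OF continuous compact_Icc]]
    unfolding bounded_pos by blast
  have "g * c_low \<le> rho r * Nsq g rho r \<and> rho r * Nsq g rho r \<le> g * D" if r: "r \<in> {-H..0}" for r
  proof -
    have "c_low \<le> - deriv rho r" "\<bar>deriv rho r\<bar> \<le> D"
      using drho D(2) r by auto
    then have "c_low \<le> - deriv rho r" "- deriv rho r \<le> D"
      by linarith+
    then have "g * c_low \<le> g * (- deriv rho r)" "g * (- deriv rho r) \<le> g * D"
      using g by (intro mult_left_mono; simp)+
    moreover have "rho r * Nsq g rho r = g * (- deriv rho r)"
      using rho r by (simp add: Nsq_def)
    ultimately show ?thesis
      by simp
  qed
  with D(1) show ?thesis
    by blast
qed

lemma divide_mult_between:
  fixes x y m M lo hi :: real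
  assumes "0 < m" "m \<le> x" "x \<le> M" "lo \<le> y" "y \<le> hi" "0 \<le> lo"
  shows "lo / M * x \<le> y \<and> y \<le> hi / m * x"
proof
  have "lo / M * x \<le> lo / M * M"
    using assms by (intro mult_left_mono) auto
  also have "\<dots> \<le> y"
    using assms by simp
  finally show "lo / M * x \<le> y" .
  have "y \<le> hi / m * m"
    using assms by simp
  also have "\<dots> \<le> hi / m * x"
    using assms by (intro mult_left_mono) auto
  finally show "y \<le> hi / m * x" .
qed

lemma weighted_orthonormal_family_Nsq:
  assumes g: "g > 0" and smooth: "smooth_on {-H..0} rho" and c_low: "c_low > 0" and c_up: "c_up > 0"
    and rho_bounds: "\<forall>r\<in>{-H..0}. c_low \<le> rho r \<and> rho r \<le> c_up"
    and drho: "\<forall>r\<in>{-H..0}. - deriv rho r \<ge> c_low"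
    and eig: "\<forall>n\<ge>1. SL_eigen H rho (Nsq g rho) (c n) (f n)"
    and onb: "ONB_weighted H (\<lambda>r. rho r * Nsq g rho r) f"
  shows "\<exists>q0 q1. weighted_orthonormal_family H rho (\<lambda>r. rho r * Nsq g rho r) f q0 q1"
proof -
  let ?w = "\<lambda>r. rho r * Nsq g rho r"
  have rho_pos: "\<forall>r\<in>{-H..0}. rho r > 0"
    using rho_bounds c_low by force
  obtain D where D_pos: "D > 0" and D: "\<forall>r\<in>{-H..0}. g * c_low \<le> ?w r \<and> ?w r \<le> g * D"
    using Nsq_weight_bounds[OF g _ drho smooth_on_imp_continuous_on(2)[OF smooth]] rho_pos by force
  have w_pos: "?w r > 0" if "r \<in> {-H..0}" for r
    using D g c_low that by (meson mult_pos_pos order_less_le_trans)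
  have continuous_f: "continuous_on {-H..0} (f n)" if "n \<ge> 1" for n
    using eig that by (simp add: SL_eigen_def)
  have continuous_w: "continuous_on {-H..0} ?w"
    unfolding Nsq_def using smooth_on_imp_continuous_on[OF smooth] rho_pos
    by (intro continuous_intros) auto
  have gD: "g * D > 0"
    using g D_pos by simp
  have "weighted_orthonormal_family H rho ?w f (c_low / (g * D)) (c_up / (g * c_low))"
  proof (unfold_locales)
    show "c_low / (g * D) * ?w r \<le> rho r \<and> rho r \<le> c_up / (g * c_low) * ?w r" if "r \<in> {-H..0}" for r
      using D rho_bounds that g c_low by (intro divide_mult_between) auto
  next
    show "integral {-H..0} (\<lambda>r. f n r * f m r * ?w r) = (if n = m then 1 else 0)" if "n \<ge> 1" "m \<ge> 1" for n m
      using onb that continuous_f continuous_w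
      by (simp add: ONB_weighted_def set_integral_eq_integral_continuous[symmetric] continuous_intros)
  qed (use continuous_f continuous_w w_pos smooth_on_imp_continuous_on(1)[OF smooth] g c_low c_up gD in auto)
  then show ?thesis
    by blast
qed

theorem proposition3p2:
  fixes H g c_low c_up :: real
    and rho :: "real \<Rightarrow> real"
    and c :: "nat \<Rightarrow> real"
    and f :: "nat \<Rightarrow> real \<Rightarrow> real"
  assumes H: "H > 0" and g: "g > 0"
    and smooth: "smooth_on {-H..0} rho"
    and cpos: "c_low > 0" "c_up > 0"
    and rho_bounds: "\<forall>r\<in>{-H..0}. c_low \<le> rho r \<and> rho r \<le> c_up"
    and drho: "\<forall>r\<in>{-H..0}. - deriv rho r \<ge> c_low"
    and eig: "\<forall>n\<ge>1. SL_eigen H rho (Nsq g rho) (c n) (f n)"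
    and cdec: "\<forall>n\<ge>1. \<forall>m\<ge>n. c m \<le> c n"
    and onb: "ONB_weighted H (\<lambda>r. rho r * Nsq g rho r) f"
  shows "\<exists>C>0.
    \<comment> \<open>(i)\<close>
    (\<forall>u\<in>l2. (\<forall>n\<ge>1. (\<lambda>m. Mmat H rho c f n m * u m) summable_on {1..})) \<and>
    bounded_linear_l2 (Mop (Mmat H rho c f)) \<and>
    (\<forall>u\<in>l2. l2norm (Mop (Mmat H rho c f) u) \<le> C * l2norm (\<lambda>n. c n * u n)) \<and>
    \<comment> \<open>(ii)\<close>
    (\<forall>u\<in>l2. \<forall>v\<in>l2. l2inner (Mop (Mmat H rho c f) u) v = l2inner u (Mop (Mmat H rho c f) v)) \<and>
    \<comment> \<open>(iii)\<close>
    (\<forall>u\<in>l2. l2inner (Mop (Mmat H rho c f) u) u \<ge> (1 / C) * (l2norm (\<lambda>n. c n * u n))\<^sup>2) \<and>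
    \<comment> \<open>(iv)\<close>
    (\<exists>S. positive_l2 S \<and> (\<forall>u\<in>l2. S (S u) = Mop (Mmat H rho c f) u) \<and>
         (\<forall>S'. positive_l2 S' \<and> (\<forall>u\<in>l2. S' (S' u) = Mop (Mmat H rho c f) u)
               \<longrightarrow> (\<forall>u\<in>l2. S' u = S u)) \<and>
         (\<forall>u\<in>l2. (1 / C) * l2norm (\<lambda>n. c n * u n) \<le> l2norm (S u) \<and>
                  l2norm (S u) \<le> C * l2norm (\<lambda>n. c n * u n))) \<and>
    \<comment> \<open>(v)\<close>
    (\<forall>K. (\<forall>r\<in>{-H..0}. Nsq g rho r = K) \<longrightarrow>
         (\<forall>n\<ge>1. \<forall>m\<ge>1. Mmat H rho c f n m = (if n = m then (c n)\<^sup>2 / K else 0)))"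
proof -
  let ?w = "\<lambda>r. rho r * Nsq g rho r"
  obtain q0 q1 where "weighted_orthonormal_family H rho ?w f q0 q1"
    using weighted_orthonormal_family_Nsq[OF g smooth cpos rho_bounds drho eig onb] by blast
  then interpret weighted_orthonormal_family H rho ?w f q0 q1 .
  have c_bound: "\<forall>n\<ge>1. \<bar>c n\<bar> \<le> c 1"
    using eig cdec by (auto simp: SL_eigen_def)
  have "\<forall>u\<in>l2. \<forall>n\<ge>1. (\<lambda>m. Mmat H rho c f n m * u m) summable_on {1..}"
    using has_sum_Mmat_row[OF c_bound] by (auto simp: summable_on_def)
  moreover have "\<forall>K. (\<forall>r\<in>{-H..0}. Nsq g rho r = K) \<longrightarrow>
      (\<forall>n\<ge>1. \<forall>m\<ge>1. Mmat H rho c f n m = (if n = m then (c n)\<^sup>2 / K else 0))"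
    using Mmat_eq_if_proportional H by simp
  moreover note scaled_op_estimates[OF c_bound positive_l2_gram_op gram_op_form_bounds l2norm_gram_op_le
      q0_pos q1_pos Mop_Mmat[OF c_bound]]
  ultimately show ?thesis
    by blast
qed

end
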